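(* The set of $q\in(0,1)$ for which there exists exactly one $S$-gap shift with entropy $q$ has Hausdorff dimension $1$.
   Context: For a nonempty set $S\subseteq\{0,1,2,\dots\}$, the $S$-gap shift $X(S)\subseteq\{0,1\}^{\mathbb{Z}}$ is the set of bi-infinite binary sequences in which the number of consecutive zeros between ones is always an element of $S$. The entropy of a shift $X$ is $h(X)=\lim_n\frac1n\log|\mathcal{B}_n(X)|$, where $\mathcal{B}_n(X)$ is the set of words of length $n$ occurring in points of $X$ and $\log$ is to base $2$. *)

theory Defs
  imports "HOL-Analysis.Analysis"
begin

text \<open>Points of the full shift {0,1}^Z are functions int => bool (True = 1, False = 0).\<close>
definition gap_shift :: "nat set \<Rightarrow> (int \<Rightarrow> bool) set" where
  "gap_shift S = {x. \<forall>i j. i < j \<and> x i \<and> x j \<and> (\<forall>k. i < k \<and> k < j \<longrightarrow> \<not> x k)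
                        \<longrightarrow> nat (j - i - 1) \<in> S}"

definition blocks :: "(int \<Rightarrow> bool) set \<Rightarrow> nat \<Rightarrow> bool list set" where
  "blocks X n = {w. \<exists>x\<in>X. \<exists>i::int. w = map (\<lambda>k. x (i + int k)) [0..<n]}"

definition entropy :: "(int \<Rightarrow> bool) set \<Rightarrow> real" where
  "entropy X = lim (\<lambda>n. log 2 (real (card (blocks X n))) / real n)"

definition hausdorff_measure :: "real \<Rightarrow> real set \<Rightarrow> ennreal" where
  "hausdorff_measure s A =
     (SUP \<delta>\<in>{0<..}. INF U\<in>{U :: nat \<Rightarrow> real set. A \<subseteq> (\<Union>i. U i) \<and>
                         (\<forall>i. bounded (U i) \<and> diameter (U i) \<le> \<delta>)}.
                 (\<Sum>i. ennreal (diameter (U i) powr s)))"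

definition hausdorff_dim :: "real set \<Rightarrow> real" where
  "hausdorff_dim A = Inf {s. 0 \<le> s \<and> hausdorff_measure s A = 0}"

end

theory Submission
  imports Defs "HOL-Real_Asymp.Real_Asymp"
begin

(* The entropy of X(S) is the unique q > 0 with sum over n in S of 2 powr (-q * (n + 1)) equal
   to 1: comparing word counts with the gap series bounds the entropy from above, and a renewal
   (Cauchy product) argument bounds it from below. So q is the entropy of exactly one gap shift
   iff no gap set other than S has x = 2 powr -q as a root of its gap series.
   For k > 0 and a binary sequence w we build a gap set whose every window of k + 2 consecutive
   large integers contains both a gap and a non-gap; comparing two gap series at their first
   difference shows that its root is unique. Roots of codings of different sequences are
   separated by 2 powr -(code_pos k p + k + 6), where p is the first differing bit and
   code_pos k p is about p * (k + 2) / k, so the binary value of w is a Hoelder function, of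
   exponent k / (k + 2), of the corresponding entropy. As the binary values fill [0, 1), the
   entropies have positive s-dimensional measure for s <= k / (k + 2); letting k grow gives
   dimension 1. *)

section \<open>Fekete's lemma and the entropy of a shift\<close>

lemma subadditive_iterate:
  fixes a :: "nat \<Rightarrow> real"
  assumes sub: "\<And>m n. a (m + n) \<le> a m + a n"
  shows "a (q * k + r) \<le> real q * a k + a r"
proof (induction q)
  case (Suc q)
  have "a (Suc q * k + r) = a (k + (q * k + r))" by (simp add: algebra_simps)
  also have "\<dots> \<le> a k + a (q * k + r)" by (rule sub)
  finally show ?case using Suc by (simp add: algebra_simps)
qed simp

lemma subadditive_le_linear:
  fixes a :: "nat \<Rightarrow> real"
  assumes sub: "\<And>m n. a (m + n) \<le> a m + a n" and nonneg: "\<And>n. 0 \<le> a n" and "0 < k"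
  obtains C where "\<And>n. a n \<le> real n * (a k / real k) + C"
proof
  define C where "C = Max (a ` {..<k})"
  fix n
  have "a n \<le> real (n div k) * a k + a (n mod k)"
    using subadditive_iterate[OF sub, of "n div k" k "n mod k"] by simp
  also have "real (n div k) * a k \<le> real n * (a k / real k)"
  proof -
    have "real (n div k) * real k \<le> real n"
      by (metis of_nat_le_iff of_nat_mult div_times_less_eq_dividend)
    then have "real (n div k) \<le> real n / real k" using \<open>0 < k\<close> by (simp add: field_simps)
    then show ?thesis using nonneg[of k] by (metis mult_right_mono times_divide_eq_left times_divide_eq_right)
  qed
  also have "a (n mod k) \<le> C"
    unfolding C_def using \<open>0 < k\<close> by (intro Max_ge) auto
  finally show "a n \<le> real n * (a k / real k) + C" by simp
qed

theorem fekete_subadditive: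
  fixes a :: "nat \<Rightarrow> real"
  assumes sub: "\<And>m n. a (m + n) \<le> a m + a n" and nonneg: "\<And>n. 0 \<le> a n"
  shows "(\<lambda>n. a n / real n) \<longlonglongrightarrow> Inf ((\<lambda>n. a n / real n) ` {1..})"
    (is "_ \<longlonglongrightarrow> ?L")
proof (rule LIMSEQ_I)
  fix e :: real assume "0 < e"
  have bdd: "bdd_below ((\<lambda>n. a n / real n) ` {1..})"
    by (rule bdd_belowI[of _ 0]) (use nonneg in auto)
  have "?L < ?L + e / 2" using \<open>0 < e\<close> by simp
  then obtain k where k: "1 \<le> k" "a k / real k < ?L + e / 2"
    by (subst (asm) cInf_less_iff[OF _ bdd]) auto
  obtain C where C: "\<And>n. a n \<le> real n * (a k / real k) + C"
    using subadditive_le_linear[OF sub nonneg, of k] k by auto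
  obtain N :: nat where N: "2 * C / e < real N"
    using reals_Archimedean2 by blast
  have "\<bar>a n / real n - ?L\<bar> < e" if "N + 1 \<le> n" for n
  proof -
    have n: "0 < real n" and "2 * C / e < real n" using N that by auto
    then have "C / real n < e / 2" using \<open>0 < e\<close> by (simp add: field_simps)
    moreover have "a n / real n \<le> a k / real k + C / real n"
      using C[of n] n by (simp add: field_simps)
    moreover have "?L \<le> a n / real n" using that by (intro cInf_lower bdd) auto
    ultimately show ?thesis using k by linarith
  qed
  then show "\<exists>N. \<forall>n\<ge>N. norm (a n / real n - ?L) < e" by auto
qed

lemma finite_blocks: "finite (blocks X n)"
  by (rule finite_subset[OF _ finite_lists_length_eq[of UNIV n]]) (auto simp: blocks_def)

lemma card_blocks_ge_1:
  assumes "X \<noteq> {}"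
  shows "1 \<le> card (blocks X n)"
proof -
  obtain x where "x \<in> X" using assms by auto
  then have "map (\<lambda>k. x (0 + int k)) [0..<n] \<in> blocks X n" unfolding blocks_def by blast
  then show ?thesis using finite_blocks[of X n] by (metis One_nat_def Suc_leI card_gt_0_iff empty_iff)
qed

lemma card_blocks_add_le: "card (blocks X (m + n)) \<le> card (blocks X m) * card (blocks X n)"
proof -
  have "blocks X (m + n) \<subseteq> (\<lambda>(u, v). u @ v) ` (blocks X m \<times> blocks X n)"
  proof
    fix w assume "w \<in> blocks X (m + n)"
    then obtain x i where x: "x \<in> X" and w: "w = map (\<lambda>k. x (i + int k)) [0..<m + n]"
      unfolding blocks_def by auto
    define u where "u = map (\<lambda>k. x (i + int k)) [0..<m]"
    define v where "v = map (\<lambda>k. x ((i + int m) + int k)) [0..<n]"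
    have "w = u @ v" unfolding w u_def v_def
      by (rule nth_equalityI) (auto simp: nth_append algebra_simps)
    moreover have "u \<in> blocks X m" "v \<in> blocks X n"
      unfolding u_def v_def blocks_def using x by blast+
    ultimately show "w \<in> (\<lambda>(u, v). u @ v) ` (blocks X m \<times> blocks X n)" by auto
  qed
  then have "card (blocks X (m + n)) \<le> card ((\<lambda>(u, v). u @ v) ` (blocks X m \<times> blocks X n))"
    by (intro card_mono finite_imageI finite_cartesian_product finite_blocks)
  also have "\<dots> \<le> card (blocks X m \<times> blocks X n)" by (rule card_image_le) (simp add: finite_blocks)
  finally show ?thesis by (simp add: card_cartesian_product)
qed

theorem entropy_LIMSEQ:
  assumes "X \<noteq> {}"
  shows "(\<lambda>n. log 2 (real (card (blocks X n))) / real n) \<longlonglongrightarrow> entropy X"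
proof -
  let ?a = "\<lambda>n. log 2 (real (card (blocks X n)))"
  have pos: "0 < real (card (blocks X n))" for n using card_blocks_ge_1[OF assms, of n] by simp
  have "?a (m + n) \<le> ?a m + ?a n" for m n
  proof -
    have "real (card (blocks X (m + n))) \<le> real (card (blocks X m)) * real (card (blocks X n))"
      by (metis card_blocks_add_le of_nat_le_iff of_nat_mult)
    then show ?thesis using pos by (simp add: log_mult_pos[symmetric])
  qed
  moreover have "0 \<le> ?a n" for n using card_blocks_ge_1[OF assms, of n] by simp
  ultimately have "(\<lambda>n. ?a n / real n) \<longlonglongrightarrow> Inf ((\<lambda>n. ?a n / real n) ` {1..})"
    by (rule fekete_subadditive)
  then show ?thesis unfolding entropy_def by (simp add: limI)
qed

section \<open>Words of a gap shift\<close>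

definition gap_word :: "nat set \<Rightarrow> bool list \<Rightarrow> bool" where
  "gap_word S w \<longleftrightarrow> (\<forall>i j. i < j \<and> j < length w \<and> w ! i \<and> w ! j \<and> (\<forall>k. i < k \<and> k < j \<longrightarrow> \<not> w ! k)
                        \<longrightarrow> j - i - 1 \<in> S)"

lemma gap_word_if_block:
  assumes "w \<in> blocks (gap_shift S) n"
  shows "length w = n \<and> gap_word S w"
proof -
  obtain x i where x: "x \<in> gap_shift S" and w: "w = map (\<lambda>k. x (i + int k)) [0..<n]"
    using assms unfolding blocks_def by auto
  have "jj - ii - 1 \<in> S"
    if h: "ii < jj" "jj < length w" "w ! ii" "w ! jj" "\<forall>k. ii < k \<and> k < jj \<longrightarrow> \<not> w ! k" for ii jj
  proof -
    have key: "\<And>a b. a < b \<Longrightarrow> x a \<Longrightarrow> x b \<Longrightarrow> (\<forall>k. a < k \<and> k < b \<longrightarrow> \<not> x k)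
        \<Longrightarrow> nat (b - a - 1) \<in> S"
      using x unfolding gap_shift_def by blast
    have "nat ((i + int jj) - (i + int ii) - 1) \<in> S"
    proof (rule key)
      show "\<forall>k. i + int ii < k \<and> k < i + int jj \<longrightarrow> \<not> x k"
      proof (intro allI impI)
        fix k assume k: "i + int ii < k \<and> k < i + int jj"
        then have "ii < nat (k - i) \<and> nat (k - i) < jj" by auto
        then have "\<not> w ! nat (k - i)" using h(5) by blast
        then show "\<not> x k" using h(2) k w by auto
      qed
    qed (use h w in auto)
    then show ?thesis using h(1) by (simp add: nat_diff_distrib)
  qed
  then show ?thesis using w unfolding gap_word_def by auto
qed

lemma zero_extension_in_gap_shift:
  assumes "gap_word S v"
  shows "(\<lambda>k. 0 \<le> k \<and> k < int (length v) \<and> v ! nat k) \<in> gap_shift S"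
  unfolding gap_shift_def
proof (intro CollectI allI impI)
  fix i j :: int
  let ?x = "\<lambda>k. 0 \<le> k \<and> k < int (length v) \<and> v ! nat k"
  assume h: "i < j \<and> ?x i \<and> ?x j \<and> (\<forall>k. i < k \<and> k < j \<longrightarrow> \<not> ?x k)"
  have "\<not> v ! k" if "nat i < k" "k < nat j" for k
  proof -
    have "i < int k \<and> int k < j" using that h by auto
    then show ?thesis using h that by auto
  qed
  then have "nat j - nat i - 1 \<in> S"
    using assms h unfolding gap_word_def by (elim allE[of _ "nat i"] allE[of _ "nat j"]) auto
  moreover have "nat (j - i - 1) = nat j - nat i - 1" using h by auto
  ultimately show "nat (j - i - 1) \<in> S" by simp
qed

lemma gap_word_drop: "gap_word S w \<Longrightarrow> gap_word S (drop m w)"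
  unfolding gap_word_def
proof (intro allI impI)
  fix i j
  assume ok: "\<forall>i j. i < j \<and> j < length w \<and> w ! i \<and> w ! j \<and> (\<forall>k. i < k \<and> k < j \<longrightarrow> \<not> w ! k)
                \<longrightarrow> j - i - 1 \<in> S"
    and h: "i < j \<and> j < length (drop m w) \<and> drop m w ! i \<and> drop m w ! j \<and>
            (\<forall>k. i < k \<and> k < j \<longrightarrow> \<not> drop m w ! k)"
  have w_between: "\<not> w ! k" if "m + i < k" "k < m + j" for k
  proof -
    have between: "\<forall>k. i < k \<and> k < j \<longrightarrow> \<not> drop m w ! k" using h by blast
    have "i < k - m \<and> k - m < j" using that by auto
    then have "\<not> drop m w ! (k - m)" by (rule between[rule_format])
    moreover have "m \<le> length w" using h by auto
    ultimately show ?thesis using that by simp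
  qed
  have "(m + j) - (m + i) - 1 \<in> S"
    by (rule ok[rule_format]) (use h w_between in auto)
  then show "j - i - 1 \<in> S" by simp
qed

lemma gap_word_Cons_gap:
  assumes ok: "gap_word S v" and "v \<noteq> []" "v ! 0" and "s \<in> S"
  shows "gap_word S (True # replicate s False @ v)"
  unfolding gap_word_def
proof (intro allI impI)
  fix i j
  let ?w = "True # replicate s False @ v"
  assume h: "i < j \<and> j < length ?w \<and> ?w ! i \<and> ?w ! j \<and> (\<forall>k. i < k \<and> k < j \<longrightarrow> \<not> ?w ! k)"
  have nth_w: "?w ! k = (if k = 0 then True else if k \<le> s then False else v ! (k - s - 1))" for k
    by (cases k) (auto simp: nth_append)
  show "j - i - 1 \<in> S"
  proof (cases "i = 0")
    case True
    have "s + 1 \<le> j" using h nth_w[of j] by (cases "j \<le> s") auto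
    moreover have "\<not> j > s + 1"
      using h True nth_w[of "s + 1"] \<open>v ! 0\<close> by auto
    ultimately have "j = s + 1" by simp
    then show ?thesis using True \<open>s \<in> S\<close> by simp
  next
    case False
    then have i: "s + 1 \<le> i" using h nth_w[of i] by (auto split: if_splits)
    have v_between: "\<not> v ! k" if "i - s - 1 < k" "k < j - s - 1" for k
    proof -
      have between: "\<forall>k. i < k \<and> k < j \<longrightarrow> \<not> ?w ! k" using h by blast
      have "i < k + s + 1 \<and> k + s + 1 < j" using i that by auto
      then have "\<not> ?w ! (k + s + 1)" by (rule between[rule_format])
      then show ?thesis using nth_w[of "k + s + 1"] by simp
    qed
    have "(j - s - 1) - (i - s - 1) - 1 \<in> S"
    proof (rule ok[unfolded gap_word_def, rule_format])
      show "i - s - 1 < j - s - 1 \<and> j - s - 1 < length v \<and> v ! (i - s - 1) \<and> v ! (j - s - 1) \<and>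
          (\<forall>k. i - s - 1 < k \<and> k < j - s - 1 \<longrightarrow> \<not> v ! k)"
        using h i nth_w[of i] nth_w[of j] v_between by auto
    qed
    then show ?thesis using i h by (simp add: algebra_simps)
  qed
qed

lemma gap_shift_nonempty: "gap_shift S \<noteq> {}"
proof -
  have "(\<lambda>_. False) \<in> gap_shift S" unfolding gap_shift_def by auto
  then show ?thesis by blast
qed

lemma card_blocks_gap_shift_pos: "0 < card (blocks (gap_shift S) n)"
  using card_blocks_ge_1[OF gap_shift_nonempty, of S n] by simp

section \<open>The gap series\<close>

lemma geometric_Suc_sums:
  fixes c :: real
  assumes "\<bar>c\<bar> < 1"
  shows "(\<lambda>n. c ^ Suc n) sums (c / (1 - c))"
  using sums_mult[OF geometric_sums[of c], of c] assms by (simp add: divide_inverse)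

definition gap_series :: "nat set \<Rightarrow> real \<Rightarrow> real" where
  "gap_series S y = (\<Sum>n. if n \<in> S then y ^ Suc n else 0)"

lemma summable_gap_series:
  fixes y :: real
  assumes "\<bar>y\<bar> < 1"
  shows "summable (\<lambda>n. if n \<in> S then y ^ Suc n else 0)"
proof (rule summable_comparison_test'[of "\<lambda>n. \<bar>y\<bar> ^ Suc n"])
  show "summable (\<lambda>n. \<bar>y\<bar> ^ Suc n)"
    using geometric_Suc_sums[of "\<bar>y\<bar>"] assms by (auto simp: sums_iff)
qed (auto simp: power_abs abs_mult)

lemma gap_series_nonneg: "0 \<le> y \<Longrightarrow> y < 1 \<Longrightarrow> 0 \<le> gap_series S y"
  unfolding gap_series_def by (intro suminf_nonneg summable_gap_series) auto

lemma gap_series_ge_partial: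
  assumes "0 \<le> y" "y < 1"
  shows "(\<Sum>s\<in>{s. s \<in> S \<and> s < m}. y ^ Suc s) \<le> gap_series S y"
proof -
  have "(\<Sum>s\<in>{s. s \<in> S \<and> s < m}. y ^ Suc s) = (\<Sum>s<m. if s \<in> S then y ^ Suc s else 0)"
    by (simp add: sum.inter_filter[symmetric] conj_commute)
  also have "\<dots> \<le> gap_series S y" unfolding gap_series_def
    by (rule sum_le_suminf[OF summable_gap_series]) (use assms in auto)
  finally show ?thesis .
qed

lemma gap_series_ge_term:
  assumes "0 \<le> y" "y < 1" "j \<in> S"
  shows "y ^ Suc j \<le> gap_series S y"
proof -
  have "(\<Sum>n\<in>{j}. if n \<in> S then y ^ Suc n else 0) \<le> gap_series S y"
    unfolding gap_series_def by (rule sum_le_suminf[OF summable_gap_series]) (use assms in auto)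
  then show ?thesis using assms by simp
qed

lemma gap_series_le_miss:
  assumes "0 \<le> y" "y < 1" "j \<notin> S"
  shows "gap_series S y \<le> y / (1 - y) - y ^ Suc j"
proof -
  let ?g = "\<lambda>n. if n \<in> S then y ^ Suc n else 0"
  have geo: "(\<lambda>n. y ^ Suc n) sums (y / (1 - y))" using assms by (intro geometric_Suc_sums) auto
  have "(\<Sum>n\<in>{j}. y ^ Suc n - ?g n) \<le> (\<Sum>n. y ^ Suc n - ?g n)"
    by (rule sum_le_suminf[OF summable_diff[OF sums_summable[OF geo] summable_gap_series]])
      (use assms in auto)
  also have "\<dots> = y / (1 - y) - gap_series S y" unfolding gap_series_def
    using suminf_diff[OF sums_summable[OF geo] summable_gap_series] geo assms by (simp add: sums_iff)
  finally show ?thesis using assms by simp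
qed

lemma gap_series_le_geometric:
  assumes "0 \<le> y" "y < 1"
  shows "gap_series S y \<le> y / (1 - y)"
proof -
  have "gap_series S y \<le> (\<Sum>n. y ^ Suc n)" unfolding gap_series_def
    using assms geometric_Suc_sums[of y] by (intro suminf_le summable_gap_series) (auto simp: sums_iff)
  then show ?thesis using assms geometric_Suc_sums[of y] by (simp add: sums_iff)
qed

lemma gap_series_split:
  assumes "0 \<le> y" "y < 1"
  shows "gap_series S y = (\<Sum>i<Suc n. if i \<in> S then y ^ Suc i else 0)
                          + y ^ Suc n * gap_series {i. n + 1 + i \<in> S} y"
proof -
  let ?f = "\<lambda>i. if i \<in> S then y ^ Suc i else 0"
  have "gap_series S y = (\<Sum>i. ?f (i + Suc n)) + (\<Sum>i<Suc n. ?f i)"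
    unfolding gap_series_def by (rule suminf_split_initial_segment[OF summable_gap_series]) (use assms in auto)
  moreover have "(\<lambda>i. ?f (i + Suc n)) =
      (\<lambda>i. y ^ Suc n * (if i \<in> {i. n + 1 + i \<in> S} then y ^ Suc i else 0))"
    by (rule ext) (simp add: power_add[symmetric] add.commute add.left_commute)
  moreover have "(\<Sum>i. y ^ Suc n * (if i \<in> {i. n + 1 + i \<in> S} then y ^ Suc i else 0))
      = y ^ Suc n * gap_series {i. n + 1 + i \<in> S} y"
    unfolding gap_series_def by (rule suminf_mult[OF summable_gap_series]) (use assms in auto)
  ultimately show ?thesis by simp
qed

lemma gap_series_increment_bounds:
  assumes "0 \<le> u" "u \<le> v" "v \<le> b" "b < 1"
  shows "0 \<le> gap_series S v - gap_series S u" "gap_series S v - gap_series S u \<le> (v - u) / (1 - b)^2"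
proof -
  let ?f = "\<lambda>x n. if n \<in> S then x ^ Suc n else (0::real)"
  have sv: "summable (?f v)" and su: "summable (?f u)" using assms by (auto intro: summable_gap_series)
  have geo: "(\<lambda>n. x ^ Suc n) sums (x / (1 - x))" if "x \<in> {u, v}" for x
    using that assms by (intro geometric_Suc_sums) auto
  have diff: "gap_series S v - gap_series S u = (\<Sum>n. ?f v n - ?f u n)"
    unfolding gap_series_def by (rule suminf_diff[OF sv su])
  have terms: "0 \<le> ?f v n - ?f u n" "?f v n - ?f u n \<le> v ^ Suc n - u ^ Suc n" for n
    using assms power_mono[of u v "Suc n"] by auto
  show "0 \<le> gap_series S v - gap_series S u"
    unfolding diff by (intro suminf_nonneg summable_diff sv su terms)
  have "(\<Sum>n. ?f v n - ?f u n) \<le> (\<Sum>n. v ^ Suc n - u ^ Suc n)"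
    by (intro suminf_le terms summable_diff sv su sums_summable[OF geo]) auto
  also have "\<dots> = v / (1 - v) - u / (1 - u)"
    using sums_unique[OF sums_diff[OF geo geo]] by auto
  also have "\<dots> = (v - u) / ((1 - v) * (1 - u))" using assms by (simp add: field_simps)
  also have "\<dots> \<le> (v - u) / (1 - b)^2"
    using assms by (intro divide_left_mono) (auto simp: power2_eq_square intro: mult_mono)
  finally show "gap_series S v - gap_series S u \<le> (v - u) / (1 - b)^2" unfolding diff .
qed

lemma isCont_gap_series:
  fixes y :: real
  assumes "\<bar>y\<bar> < 1"
  shows "isCont (gap_series S) y"
proof -
  let ?c = "\<lambda>n. if n \<in> S then 1 else 0 :: real"
  have summable: "summable (\<lambda>n. ?c n * x ^ n)" if "\<bar>x\<bar> < 1" for x :: real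
    by (rule summable_comparison_test'[of "\<lambda>n. \<bar>x\<bar> ^ n"]) (use that in \<open>auto simp: power_abs\<close>)
  define K where "K = (1 + \<bar>y\<bar>) / 2"
  have K: "\<bar>y\<bar> < \<bar>K\<bar>" "\<bar>K\<bar> < 1" using assms unfolding K_def by auto
  have cont: "isCont (\<lambda>x. x * (\<Sum>n. ?c n * x ^ n)) y"
    by (intro continuous_intros isCont_powser[OF summable]) (use K in auto)
  have eq: "eventually (\<lambda>x. x * (\<Sum>n. ?c n * x ^ n) = gap_series S x) (nhds y)"
  proof (rule eventually_mono[OF eventually_nhds_in_open[of "{-1<..<1}"]])
    fix x :: real assume "x \<in> {-1<..<1}"
    then have "x * (\<Sum>n. ?c n * x ^ n) = (\<Sum>n. x * (?c n * x ^ n))"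
      by (intro suminf_mult[symmetric] summable) auto
    also have "\<dots> = gap_series S x" unfolding gap_series_def by (rule arg_cong[of _ _ suminf]) auto
    finally show "x * (\<Sum>n. ?c n * x ^ n) = gap_series S x" .
  qed (use assms in auto)
  show ?thesis using cont isCont_cong[OF eq] by simp
qed

section \<open>Counting words: the upper bound on entropy\<close>

definition lead_gap_words :: "nat set \<Rightarrow> nat \<Rightarrow> bool list set" where
  "lead_gap_words S n = {w. length w = n \<and> gap_word S w \<and> (0 < n \<longrightarrow> w ! 0)}"

lemma finite_lead_gap_words: "finite (lead_gap_words S n)"
  by (rule finite_subset[OF _ finite_lists_length_eq[of UNIV n]]) (auto simp: lead_gap_words_def)

lemma obtain_first_True:
  assumes "\<exists>i<length w. w ! i"
  obtains a where "a < length w" "w ! a" "\<And>i. i < a \<Longrightarrow> \<not> w ! i"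
    "w = replicate a False @ drop a w"
proof -
  define a where "a = (LEAST i. i < length w \<and> w ! i)"
  have a: "a < length w" "w ! a"
    using LeastI_ex[of "\<lambda>i. i < length w \<and> w ! i"] assms unfolding a_def by auto
  have before: "\<not> w ! i" if "i < a" for i
    using not_less_Least[of i "\<lambda>i. i < length w \<and> w ! i"] that a unfolding a_def by auto
  have "take a w = replicate a False"
    by (rule nth_equalityI) (use a before in auto)
  then have "w = replicate a False @ drop a w" by (metis append_take_drop_id)
  then show ?thesis using that a before by blast
qed

lemma lead_gap_words_Suc_subset:
  "lead_gap_words S (Suc m) \<subseteq> insert (True # replicate m False)
     (\<Union>s\<in>{s. s \<in> S \<and> s < m}. (\<lambda>u. True # replicate s False @ u) ` lead_gap_words S (m - s))"
proof
  fix w assume w: "w \<in> lead_gap_words S (Suc m)"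
  then obtain w' where w': "w = True # w'" "length w' = m" and ok: "gap_word S w"
    unfolding lead_gap_words_def by (cases w) auto
  show "w \<in> insert (True # replicate m False)
     (\<Union>s\<in>{s. s \<in> S \<and> s < m}. (\<lambda>u. True # replicate s False @ u) ` lead_gap_words S (m - s))"
  proof (cases "\<exists>i<m. w' ! i")
    case False
    then have "w' = replicate m False" using w' by (intro nth_equalityI) auto
    then show ?thesis using w' by simp
  next
    case True
    then obtain s where s: "s < m" "w' ! s" and before: "\<And>i. i < s \<Longrightarrow> \<not> w' ! i"
      and split: "w' = replicate s False @ drop s w'"
      using obtain_first_True[of w'] w' by auto
    have "Suc s - 0 - 1 \<in> S"
    proof (rule ok[unfolded gap_word_def, rule_format])
      have "\<not> w ! k" if "0 < k" "k < Suc s" for k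
        using that before[of "k - 1"] w'(1) by (cases k) auto
      then show "0 < Suc s \<and> Suc s < length w \<and> w ! 0 \<and> w ! Suc s \<and> (\<forall>k. 0 < k \<and> k < Suc s \<longrightarrow> \<not> w ! k)"
        using w' s by auto
    qed
    moreover have "drop s w' \<in> lead_gap_words S (m - s)"
      using gap_word_drop[OF ok, of "Suc s"] w' s unfolding lead_gap_words_def by auto
    moreover have "w = True # replicate s False @ drop s w'" using w'(1) split by simp
    ultimately show ?thesis using s by (intro insertI2 UN_I[of s]) auto
  qed
qed

lemma real_card_insert_UN_le:
  assumes "finite I" "\<And>i. i \<in> I \<Longrightarrow> finite (A i)"
  shows "real (card (insert a (\<Union>i\<in>I. A i))) \<le> 1 + (\<Sum>i\<in>I. real (card (A i)))"
proof -
  have "card (insert a (\<Union>i\<in>I. A i)) \<le> Suc (card (\<Union>i\<in>I. A i))"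
    by (rule card_insert_le_m1) auto
  moreover have "card (\<Union>i\<in>I. A i) \<le> (\<Sum>i\<in>I. card (A i))" using assms(1) by (rule card_UN_le)
  ultimately have "card (insert a (\<Union>i\<in>I. A i)) \<le> 1 + (\<Sum>i\<in>I. card (A i))" by simp
  then show ?thesis by (metis of_nat_1 of_nat_add of_nat_le_iff of_nat_sum)
qed

lemma card_lead_gap_words_le:
  fixes y :: real
  assumes y: "0 < y" "y < 1" and series: "gap_series S y \<le> 1"
  shows "real (card (lead_gap_words S n)) \<le> real (n + 1) * (1 / y) ^ n"
proof (induction n rule: less_induct)
  case (less n)
  have one_le: "1 \<le> 1 / y" using y by simp
  show ?case
  proof (cases n)
    case 0
    then have "lead_gap_words S n \<subseteq> {[]}" unfolding lead_gap_words_def by auto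
    then have "card (lead_gap_words S n) \<le> card {[] :: bool list}" by (intro card_mono) auto
    then show ?thesis using 0 by simp
  next
    case (Suc m)
    let ?I = "{s. s \<in> S \<and> s < m}"
    let ?A = "\<lambda>s. (\<lambda>u. True # replicate s False @ u) ` lead_gap_words S (m - s)"
    have "real (card (lead_gap_words S n)) \<le> real (card (insert (True # replicate m False) (\<Union>s\<in>?I. ?A s)))"
      unfolding Suc by (intro of_nat_mono card_mono lead_gap_words_Suc_subset) (auto intro: finite_lead_gap_words)
    also have "\<dots> \<le> 1 + (\<Sum>s\<in>?I. real (card (?A s)))"
      by (rule real_card_insert_UN_le) (auto intro: finite_lead_gap_words)
    also have "\<dots> \<le> 1 + (\<Sum>s\<in>?I. real (m + 1) * ((1 / y) ^ (m + 1) * y ^ Suc s))"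
    proof (intro add_left_mono sum_mono)
      fix s assume s: "s \<in> ?I"
      have "real (card (?A s)) \<le> real (card (lead_gap_words S (m - s)))"
        by (simp add: card_image_le finite_lead_gap_words)
      also have "\<dots> \<le> real (m - s + 1) * (1 / y) ^ (m - s)" using less.IH[of "m - s"] Suc by simp
      also have "\<dots> \<le> real (m + 1) * (1 / y) ^ (m - s)" using y by (intro mult_right_mono) auto
      also have "(1 / y) ^ (m - s) = (1 / y) ^ (m + 1) * y ^ Suc s"
      proof -
        have "(1 / y) ^ (m + 1) = (1 / y) ^ (m - s) * (1 / y) ^ Suc s"
          using s by (simp add: power_add[symmetric])
        then show ?thesis using y by (simp add: power_one_over)
      qed
      finally show "real (card (?A s)) \<le> real (m + 1) * ((1 / y) ^ (m + 1) * y ^ Suc s)" .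
    qed
    also have "\<dots> = 1 + real (m + 1) * (1 / y) ^ (m + 1) * (\<Sum>s\<in>?I. y ^ Suc s)"
      by (simp only: sum_distrib_left mult.assoc)
    also have "\<dots> \<le> 1 + real (m + 1) * (1 / y) ^ (m + 1)"
      using gap_series_ge_partial[of y S m] y series
      by (intro add_left_mono mult_right_le_one_le sum_nonneg) auto
    also have "\<dots> \<le> (1 / y) ^ (m + 1) + real (m + 1) * (1 / y) ^ (m + 1)"
      using one_le_power[OF one_le, of "m + 1"] by simp
    also have "\<dots> = real (n + 1) * (1 / y) ^ n" using Suc by (simp add: algebra_simps add_divide_distrib[symmetric])
    finally show ?thesis .
  qed
qed

lemma card_blocks_gap_shift_le:
  fixes y :: real
  assumes y: "0 < y" "y < 1" and series: "gap_series S y \<le> 1"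
  shows "real (card (blocks (gap_shift S) n)) \<le> real ((n + 1)^2) * (1 / y) ^ n"
proof -
  let ?A = "\<lambda>a. (\<lambda>u. replicate a False @ u) ` lead_gap_words S (n - a)"
  have one_le: "1 \<le> 1 / y" using y by simp
  have "blocks (gap_shift S) n \<subseteq> insert (replicate n False) (\<Union>a\<in>{..<n}. ?A a)"
  proof
    fix w assume "w \<in> blocks (gap_shift S) n"
    then have w: "length w = n" "gap_word S w" using gap_word_if_block by auto
    show "w \<in> insert (replicate n False) (\<Union>a\<in>{..<n}. ?A a)"
    proof (cases "\<exists>i<n. w ! i")
      case False
      then have "w = replicate n False" using w by (intro nth_equalityI) auto
      then show ?thesis by simp
    next
      case True
      then obtain a where "a < n" "w ! a" "w = replicate a False @ drop a w"
        using obtain_first_True[of w] w by auto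
      moreover have "drop a w \<in> lead_gap_words S (n - a)"
        using w \<open>a < n\<close> \<open>w ! a\<close> gap_word_drop[of S w a] unfolding lead_gap_words_def by auto
      ultimately show ?thesis by (intro insertI2 UN_I[of a]) auto
    qed
  qed
  then have "real (card (blocks (gap_shift S) n)) \<le> real (card (insert (replicate n False) (\<Union>a\<in>{..<n}. ?A a)))"
    by (intro of_nat_mono card_mono) (auto intro: finite_lead_gap_words)
  also have "\<dots> \<le> 1 + (\<Sum>a<n. real (card (?A a)))"
    by (rule real_card_insert_UN_le) (auto intro: finite_lead_gap_words)
  also have "\<dots> \<le> 1 + (\<Sum>a<n. real (n + 1) * (1 / y) ^ n)"
  proof (intro add_left_mono sum_mono)
    fix a assume "a \<in> {..<n}"
    have "real (card (?A a)) \<le> real (card (lead_gap_words S (n - a)))"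
      by (simp add: card_image_le finite_lead_gap_words)
    also have "\<dots> \<le> real (n - a + 1) * (1 / y) ^ (n - a)" by (rule card_lead_gap_words_le[OF y series])
    also have "\<dots> \<le> real (n + 1) * (1 / y) ^ n" using one_le y by (intro mult_mono power_increasing zero_le_power) auto
    finally show "real (card (?A a)) \<le> real (n + 1) * (1 / y) ^ n" .
  qed
  also have "\<dots> \<le> real ((n + 1)^2) * (1 / y) ^ n"
  proof -
    define t where "t = (1 / y) ^ n"
    have "1 \<le> t" unfolding t_def using one_le by (rule one_le_power)
    then have "1 \<le> t + real n * t" by (simp add: add_increasing2)
    then show ?thesis unfolding t_def[symmetric] by (simp add: power2_eq_square algebra_simps)
  qed
  finally show ?thesis .
qed

lemma entropy_gap_shift_le:
  assumes "0 < r" and series: "gap_series S (2 powr - r) \<le> 1"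
  shows "entropy (gap_shift S) \<le> r"
proof -
  define y where "y = 2 powr - r"
  have y: "0 < y" "y < 1" unfolding y_def using \<open>0 < r\<close> powr_less_mono[of "- r" 0 2] by auto
  have "log 2 (real (card (blocks (gap_shift S) n))) / real n \<le> r + 2 * log 2 (real n + 1) / real n"
    if "1 \<le> n" for n
  proof -
    have "real (card (blocks (gap_shift S) n)) \<le> real ((n + 1)^2) * (1 / y) ^ n"
      by (rule card_blocks_gap_shift_le[OF y series[folded y_def]])
    then have "log 2 (real (card (blocks (gap_shift S) n))) \<le> log 2 (real ((n + 1)^2) * (1 / y) ^ n)"
      using card_blocks_gap_shift_pos[of S n] y by (subst log_le_cancel_iff) auto
    also have "\<dots> = 2 * log 2 (real n + 1) + real n * r"
      using y by (simp add: y_def log_mult_pos log_nat_power powr_minus_divide add.commute)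
    finally show ?thesis using that by (simp add: field_simps)
  qed
  moreover have "(\<lambda>n. r + 2 * log 2 (real n + 1) / real n) \<longlonglongrightarrow> r" by real_asymp
  ultimately show ?thesis
    using entropy_LIMSEQ[OF gap_shift_nonempty]
    by (intro LIMSEQ_le[where X = "\<lambda>n. log 2 (real (card (blocks (gap_shift S) n))) / real n"]) auto
qed

section \<open>The lower bound on entropy and the root equation\<close>

definition closable_gap_words :: "nat set \<Rightarrow> nat \<Rightarrow> bool list set" where
  "closable_gap_words S n = {w. length w = n \<and> (0 < n \<longrightarrow> w ! 0) \<and> gap_word S (w @ [True])}"

lemma finite_closable_gap_words: "finite (closable_gap_words S n)"
  by (rule finite_subset[OF _ finite_lists_length_eq[of UNIV n]]) (auto simp: closable_gap_words_def)

lemma closable_gap_words_subset_blocks: "closable_gap_words S n \<subseteq> blocks (gap_shift S) n"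
proof
  fix w assume w: "w \<in> closable_gap_words S n"
  let ?v = "w @ [True]"
  let ?x = "\<lambda>k::int. 0 \<le> k \<and> k < int (length ?v) \<and> ?v ! nat k"
  have "?x \<in> gap_shift S"
    using w unfolding closable_gap_words_def by (intro zero_extension_in_gap_shift) auto
  moreover have "w = map (\<lambda>k. ?x (0 + int k)) [0..<n]"
    by (rule nth_equalityI) (use w in \<open>auto simp: closable_gap_words_def nth_append\<close>)
  ultimately show "w \<in> blocks (gap_shift S) n"
    unfolding blocks_def by (intro CollectI bexI[of _ ?x] exI[of _ 0])
qed

lemma card_closable_gap_words_0: "card (closable_gap_words S 0) = 1"
proof -
  have "closable_gap_words S 0 = {[]}" unfolding closable_gap_words_def gap_word_def by auto
  then show ?thesis by simp
qed

lemma Cons_replicate_False_append_neq: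
  assumes "i < j" "u = [] \<or> u ! 0"
  shows "True # replicate i False @ u \<noteq> True # replicate j False @ v"
proof
  assume eq: "True # replicate i False @ u = True # replicate j False @ v"
  have "i + length u = j + length v" using arg_cong[OF eq, of length] by simp
  then have "u ! 0" using assms by auto
  moreover have "(replicate i False @ u) ! i = (replicate j False @ v) ! i" using eq by simp
  ultimately show False using \<open>i < j\<close> by (simp add: nth_append)
qed

lemma sum_card_closable_gap_words_le:
  "(\<Sum>i\<in>{i. i \<in> S \<and> i \<le> k}. card (closable_gap_words S (k - i))) \<le> card (closable_gap_words S (Suc k))"
proof -
  let ?I = "{i. i \<in> S \<and> i \<le> k}"
  let ?A = "\<lambda>i. (\<lambda>u. True # replicate i False @ u) ` closable_gap_words S (k - i)"
  have sub: "(\<Union>i\<in>?I. ?A i) \<subseteq> closable_gap_words S (Suc k)"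
  proof (intro UN_least subsetI)
    fix i w assume i: "i \<in> ?I" and "w \<in> ?A i"
    then obtain u where u: "u \<in> closable_gap_words S (k - i)" and w: "w = True # replicate i False @ u"
      by auto
    have "gap_word S (True # replicate i False @ (u @ [True]))"
      by (rule gap_word_Cons_gap) (use u i in \<open>auto simp: closable_gap_words_def nth_append\<close>)
    then show "w \<in> closable_gap_words S (Suc k)" using u i w by (auto simp: closable_gap_words_def)
  qed
  have disjoint: "?A i \<inter> ?A j = {}" if "i \<in> ?I" "j \<in> ?I" "i \<noteq> j" for i j
  proof -
    have "True # replicate i False @ u \<noteq> True # replicate j False @ v"
      if "u \<in> closable_gap_words S (k - i)" "v \<in> closable_gap_words S (k - j)" for u v
      using \<open>i \<noteq> j\<close> that Cons_replicate_False_append_neq[of i j u v] Cons_replicate_False_append_neq[of j i v u]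
      unfolding closable_gap_words_def by (cases "i < j") auto
    then show ?thesis by blast
  qed
  have "(\<Sum>i\<in>?I. card (closable_gap_words S (k - i))) = (\<Sum>i\<in>?I. card (?A i))"
    by (intro sum.cong refl card_image[symmetric]) (auto intro: inj_onI)
  also have "\<dots> = card (\<Union>i\<in>?I. ?A i)"
    by (rule card_UN_disjoint[symmetric]) (use disjoint in \<open>auto intro: finite_closable_gap_words\<close>)
  also have "\<dots> \<le> card (closable_gap_words S (Suc k))" by (intro card_mono sub finite_closable_gap_words)
  finally show ?thesis .
qed

text \<open>By the Cauchy product, the hypotheses give \<open>suminf a * suminf b \<le> suminf b - 1\<close>.\<close>

lemma suminf_less_1_if_convolution_le_shift:
  fixes a b :: "nat \<Rightarrow> real"
  assumes "summable a" "summable b" "\<And>n. 0 \<le> a n" "\<And>n. 0 \<le> b n" "b 0 = 1"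
    and conv: "\<And>k. (\<Sum>i\<le>k. a i * b (k - i)) \<le> b (Suc k)"
  shows "suminf a < 1"
proof -
  have "suminf a * suminf b \<le> (\<Sum>k. b (Suc k))"
    by (rule sums_le[OF conv Cauchy_product_sums]) (use assms in \<open>auto simp: summable_Suc_iff summable_sums\<close>)
  also have "\<dots> = suminf b - 1" using suminf_split_head[OF \<open>summable b\<close>] \<open>b 0 = 1\<close> by simp
  finally have "suminf a * suminf b < suminf b" by simp
  moreover have "0 \<le> suminf b" using assms by (simp add: suminf_nonneg)
  ultimately show ?thesis by (metis mult_le_cancel_right1 not_le order_less_le_trans)
qed

lemma entropy_gap_shift_ge:
  assumes "0 < r" and series: "1 \<le> gap_series S (2 powr - r)"
  shows "r \<le> entropy (gap_shift S)"
proof (rule ccontr)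
  assume "\<not> r \<le> entropy (gap_shift S)"
  define q where "q = (entropy (gap_shift S) + r) / 2"
  have q: "entropy (gap_shift S) < q" "q < r" using \<open>\<not> r \<le> _\<close> unfolding q_def by auto
  define y where "y = 2 powr - r"
  have y: "0 < y" "y < 1" unfolding y_def using \<open>0 < r\<close> powr_less_mono[of "- r" 0 2] by auto
  define a where "a = (\<lambda>i. if i \<in> S then y ^ Suc i else 0)"
  define b where "b = (\<lambda>n. real (card (closable_gap_words S n)) * y ^ n)"
  have "eventually (\<lambda>n. log 2 (real (card (blocks (gap_shift S) n))) / real n < q) sequentially"
    using order_tendstoD(2)[OF entropy_LIMSEQ[OF gap_shift_nonempty] q(1)] .
  with eventually_gt_at_top[of 0]
  have "eventually (\<lambda>n. norm (b n) \<le> (2 powr (q - r)) ^ n) sequentially"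
  proof eventually_elim
    case (elim n)
    then have "0 < n" and less: "log 2 (real (card (blocks (gap_shift S) n))) / real n < q" by auto
    have pos: "0 < real (card (blocks (gap_shift S) n))" using card_blocks_gap_shift_pos by simp
    have "real (card (closable_gap_words S n)) \<le> real (card (blocks (gap_shift S) n))"
      by (intro of_nat_mono card_mono finite_blocks closable_gap_words_subset_blocks)
    also have "\<dots> = 2 powr log 2 (real (card (blocks (gap_shift S) n)))" using pos by simp
    also have "\<dots> \<le> 2 powr (real n * q)" using less \<open>0 < n\<close> by (simp add: field_simps)
    finally have card: "real (card (closable_gap_words S n)) \<le> 2 powr (real n * q)" .
    have yn: "y ^ n = 2 powr (- r * real n)" unfolding y_def by (simp add: powr_power mult.commute)
    have "b n \<le> 2 powr (real n * q) * 2 powr (- r * real n)"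
      unfolding b_def yn using card by (rule mult_right_mono) simp
    also have "\<dots> = (2 powr (q - r)) ^ n"
      by (simp add: powr_power powr_add[symmetric] algebra_simps)
    finally show "norm (b n) \<le> (2 powr (q - r)) ^ n" unfolding b_def using y by simp
  qed
  then have "summable b"
    using q powr_less_mono[of "q - r" 0 2] by (intro summable_comparison_test_ev[OF _ summable_geometric]) auto
  moreover have "(\<Sum>i\<le>k. a i * b (k - i)) \<le> b (Suc k)" for k
  proof -
    have "(\<Sum>i\<le>k. a i * b (k - i))
        = y ^ Suc k * (\<Sum>i\<in>{i. i \<in> S \<and> i \<le> k}. real (card (closable_gap_words S (k - i))))"
      unfolding sum_distrib_left
      by (rule sum.mono_neutral_cong_right)
        (auto simp: a_def b_def power_add[symmetric] mult_ac simp flip: power_Suc)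
    also have "\<dots> \<le> y ^ Suc k * real (card (closable_gap_words S (Suc k)))"
      using sum_card_closable_gap_words_le[of S k] y
      by (intro mult_left_mono) (auto simp: of_nat_sum[symmetric] simp del: of_nat_sum)
    finally show ?thesis by (simp add: b_def mult.commute)
  qed
  ultimately have "suminf a < 1"
    using y summable_gap_series[of y S] card_closable_gap_words_0[of S]
    by (intro suminf_less_1_if_convolution_le_shift[of a b]) (auto simp: a_def b_def)
  then show False using series unfolding a_def gap_series_def y_def by simp
qed

lemma entropy_gap_shift_eq_iff:
  assumes "0 < q"
  shows "entropy (gap_shift S) = q \<longleftrightarrow> gap_series S (2 powr - q) = 1"
proof
  assume "gap_series S (2 powr - q) = 1"
  then show "entropy (gap_shift S) = q"
    using entropy_gap_shift_le[OF assms, of S] entropy_gap_shift_ge[OF assms, of S] by simp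
next
  assume entropy: "entropy (gap_shift S) = q"
  define g where "g = (\<lambda>r. gap_series S (2 powr - r))"
  have "isCont (\<lambda>r. 2 powr - r :: real) q" by (intro continuous_intros) simp
  moreover have "isCont (gap_series S) (2 powr - q)"
    using assms powr_less_mono[of "- q" 0 2] by (intro isCont_gap_series) auto
  ultimately have "isCont g q" unfolding g_def by (rule isCont_o2)
  then have lim: "(g \<longlongrightarrow> g q) (at q within A)" for A
    unfolding isCont_def using tendsto_within_subset by blast
  show "g q = 1" unfolding g_def[symmetric]
  proof (rule ccontr)
    assume "g q \<noteq> 1"
    then consider "g q < 1" | "1 < g q" by linarith
    then show False
    proof cases
      case 1
      have "eventually (\<lambda>r. g r < 1 \<and> r \<in> {0<..<q}) (at_left q)"
        using order_tendstoD(2)[OF lim 1] eventually_at_left_real[OF assms] by (rule eventually_conj)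
      then have "\<exists>r. g r < 1 \<and> r \<in> {0<..<q}"
        by (rule eventually_happens'[rotated]) (simp add: trivial_limit_def[symmetric])
      then obtain r where "g r < 1" "0 < r" "r < q" by auto
      then show False using entropy_gap_shift_le[of r S] entropy unfolding g_def by auto
    next
      case 2
      have "eventually (\<lambda>r. 1 < g r \<and> r \<in> {q<..<q + 1}) (at_right q)"
        using order_tendstoD(1)[OF lim 2] eventually_at_right_real[of q "q + 1"] by (intro eventually_conj) auto
      then have "\<exists>r. 1 < g r \<and> r \<in> {q<..<q + 1}"
        by (rule eventually_happens'[rotated]) (simp add: trivial_limit_def[symmetric])
      then obtain r where "1 < g r" "q < r" by auto
      then show False using entropy_gap_shift_ge[of r S] entropy assms unfolding g_def by auto
    qed
  qed
qed

section \<open>Gap sets coding a binary sequence\<close>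

text \<open>Beyond \<open>k + 5\<close>, \<open>coded_gaps k w\<close> is read in periods of length \<open>k + 2\<close> starting at \<open>k + 6\<close>:
  the first place of each period is never a gap, the second always is, and the remaining \<open>k\<close>
  places of period \<open>i\<close> carry the bits \<open>w (i * k)\<close>, ..., \<open>w (i * k + k - 1)\<close>. So every
  \<open>k + 2\<close> consecutive integers past \<open>k + 4\<close> contain both a gap and a non-gap.\<close>

definition code_pos :: "nat \<Rightarrow> nat \<Rightarrow> nat" where
  "code_pos k b = k + 8 + (b div k) * (k + 2) + b mod k"

definition coded_gaps :: "nat \<Rightarrow> (nat \<Rightarrow> bool) \<Rightarrow> nat set" where
  "coded_gaps k w = {..<k + 5} \<union> {k + 7 + i * (k + 2) | i. True} \<union> {code_pos k b | b. w b}"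

lemma arith_progression_meets_window:
  fixes n b p :: nat
  assumes "0 < p" "b \<le> n + p"
  shows "\<exists>i. n < b + i * p \<and> b + i * p \<le> n + p"
proof (cases "n < b")
  case True
  then show ?thesis using assms by (intro exI[of _ 0]) auto
next
  case False
  define i where "i = (n - b) div p + 1"
  have "((n - b) div p) * p + (n - b) mod p = n - b" by simp
  moreover have "(n - b) mod p < p" using assms by simp
  moreover have "b + i * p = b + ((n - b) div p) * p + p" unfolding i_def by (simp add: algebra_simps)
  ultimately show ?thesis using False by (intro exI[of _ i]) linarith
qed

lemma code_pos_mod:
  assumes k: "0 < k"
  shows "code_pos k b \<ge> k + 6" "(code_pos k b - (k + 6)) mod (k + 2) = 2 + b mod k"
proof -
  show "code_pos k b \<ge> k + 6" unfolding code_pos_def by simp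
  have "code_pos k b - (k + 6) = (b div k) * (k + 2) + (2 + b mod k)" unfolding code_pos_def by simp
  moreover have "2 + b mod k < k + 2" using k by simp
  ultimately show "(code_pos k b - (k + 6)) mod (k + 2) = 2 + b mod k"
    by (metis mod_mult_self3 mod_less)
qed

lemma strict_mono_code_pos:
  assumes k: "0 < k"
  shows "strict_mono (code_pos k)"
proof (rule strict_monoI)
  fix b b' :: nat assume bb: "b < b'"
  show "code_pos k b < code_pos k b'"
  proof (cases "b div k = b' div k")
    case True
    have "b = (b div k) * k + b mod k" "b' = (b' div k) * k + b' mod k" by simp_all
    moreover have "(b div k) * k = (b' div k) * k" using True by simp
    ultimately have "b mod k < b' mod k" using bb by linarith
    moreover have "(b div k) * (k + 2) = (b' div k) * (k + 2)" using True by simp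
    ultimately show ?thesis unfolding code_pos_def by linarith
  next
    case False
    have "b div k \<le> b' div k" using bb by (simp add: div_le_mono)
    then have lt: "b div k + 1 \<le> b' div k" using False by simp
    have "b mod k < k" using k by simp
    moreover have "(b div k + 1) * (k + 2) = (b div k) * (k + 2) + (k + 2)" by (simp only: distrib_right mult_1)
    ultimately have "(b div k) * (k + 2) + b mod k < (b div k + 1) * (k + 2)" by linarith
    also have "\<dots> \<le> (b' div k) * (k + 2)" using lt by (intro mult_right_mono) auto
    finally show ?thesis unfolding code_pos_def by linarith
  qed
qed

lemma period_second_mod:
  fixes k i :: nat
  shows "(k + 7 + i * (k + 2) - (k + 6)) mod (k + 2) = 1"
proof -
  have "k + 7 + i * (k + 2) - (k + 6) = 1 + i * (k + 2)" by simp
  moreover have "(1 + i * (k + 2)) mod (k + 2) = 1 mod (k + 2)" by (rule mod_mult_self1)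
  moreover have "1 mod (k + 2) = (1::nat)" by simp
  ultimately show ?thesis by (simp only:)
qed

lemma period_first_mod:
  fixes k i :: nat
  shows "(k + 6 + i * (k + 2) - (k + 6)) mod (k + 2) = 0"
proof -
  have "k + 6 + i * (k + 2) - (k + 6) = i * (k + 2)" by simp
  moreover have "(i * (k + 2)) mod (k + 2) = 0" by (rule mod_mult_self2_is_0)
  ultimately show ?thesis by (simp only:)
qed

lemma period_start_notin_coded_gaps:
  assumes k: "0 < k"
  shows "k + 6 + i * (k + 2) \<notin> coded_gaps k w"
proof
  assume "k + 6 + i * (k + 2) \<in> coded_gaps k w"
  then consider "k + 6 + i * (k + 2) < k + 5" | j where "k + 6 + i * (k + 2) = k + 7 + j * (k + 2)"
    | b where "k + 6 + i * (k + 2) = code_pos k b" unfolding coded_gaps_def by auto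
  then show False
  proof cases
    case 1
    then show False by simp
  next
    case 2
    then show False using period_first_mod[of k i] period_second_mod[of k j] by simp
  next
    case 3
    then show False using period_first_mod[of k i] code_pos_mod[OF k, of b] by simp
  qed
qed

lemma k_plus_5_notin_coded_gaps:
  assumes k: "0 < k"
  shows "k + 5 \<notin> coded_gaps k w"
proof -
  have "k + 5 \<noteq> code_pos k b" for b using code_pos_mod(1)[OF k, of b] by simp
  then show ?thesis unfolding coded_gaps_def by auto
qed

lemma coded_gaps_hit:
  assumes k: "0 < k"
  shows "\<exists>j \<le> k + 1. n + 1 + j \<in> coded_gaps k w"
proof (cases "n + 1 < k + 5")
  case True
  then show ?thesis unfolding coded_gaps_def by (intro exI[of _ 0]) auto
next
  case False
  obtain i where i: "n < k + 7 + i * (k + 2)" "k + 7 + i * (k + 2) \<le> n + (k + 2)"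
    using arith_progression_meets_window[of "k + 2" "k + 7" n] False k by auto
  have eq: "n + 1 + (k + 7 + i * (k + 2) - (n + 1)) = k + 7 + i * (k + 2)" using i by simp
  show ?thesis
  proof (intro exI conjI)
    show "k + 7 + i * (k + 2) - (n + 1) \<le> k + 1" using i by simp
    show "n + 1 + (k + 7 + i * (k + 2) - (n + 1)) \<in> coded_gaps k w" unfolding eq coded_gaps_def by blast
  qed
qed

lemma coded_gaps_ge_if_notin: "n \<notin> coded_gaps k w \<Longrightarrow> n \<ge> k + 5"
  unfolding coded_gaps_def by (rule ccontr) auto

lemma coded_gaps_miss:
  assumes k: "0 < k" and n: "n \<notin> coded_gaps k w"
  shows "\<exists>j \<le> k + 1. n + 1 + j \<notin> coded_gaps k w"
proof -
  have "n \<ge> k + 5" using coded_gaps_ge_if_notin[OF n] .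
  then obtain i where i: "n < k + 6 + i * (k + 2)" "k + 6 + i * (k + 2) \<le> n + (k + 2)"
    using arith_progression_meets_window[of "k + 2" "k + 6" n] by auto
  have eq: "n + 1 + (k + 6 + i * (k + 2) - (n + 1)) = k + 6 + i * (k + 2)" using i by simp
  show ?thesis
  proof (intro exI conjI)
    show "k + 6 + i * (k + 2) - (n + 1) \<le> k + 1" using i by simp
    show "n + 1 + (k + 6 + i * (k + 2) - (n + 1)) \<notin> coded_gaps k w" unfolding eq by (rule period_start_notin_coded_gaps[OF k])
  qed
qed

lemma code_pos_mem_coded_gaps_iff:
  assumes k: "0 < k"
  shows "code_pos k p \<in> coded_gaps k w \<longleftrightarrow> w p"
proof
  assume "code_pos k p \<in> coded_gaps k w"
  then consider "code_pos k p < k + 5" | j where "code_pos k p = k + 7 + j * (k + 2)"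
    | b where "code_pos k p = code_pos k b" "w b" unfolding coded_gaps_def by auto
  then show "w p"
  proof cases
    case 1
    then show ?thesis using code_pos_mod(1)[OF k, of p] by simp
  next
    case 2
    then show ?thesis using code_pos_mod(2)[OF k, of p] period_second_mod[of k j] by simp
  next
    case 3
    then show ?thesis using strict_mono_eq[OF strict_mono_code_pos[OF k]] by simp
  qed
qed (auto simp: coded_gaps_def)

lemma coded_gaps_eq_below_code_pos:
  assumes k: "0 < k" and agree: "\<And>b. b < p \<Longrightarrow> w b = w' b" and n: "n < code_pos k p"
  shows "n \<in> coded_gaps k w \<longleftrightarrow> n \<in> coded_gaps k w'"
proof -
  have "(\<exists>b. n = code_pos k b \<and> w b) \<longleftrightarrow> (\<exists>b. n = code_pos k b \<and> w' b)"
  proof -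
    have lt: "n = code_pos k b \<Longrightarrow> b < p" for b
      using n strict_mono_less[OF strict_mono_code_pos[OF k]] by simp
    show ?thesis using lt agree by metis
  qed
  then show ?thesis unfolding coded_gaps_def by blast
qed

lemma gap_series_coded_gaps_ge:
  assumes "0 \<le> x" "x < 1"
  shows "x * (1 - x ^ (k + 5)) / (1 - x) \<le> gap_series (coded_gaps k w) x"
proof -
  have "{s. s \<in> coded_gaps k w \<and> s < k + 5} = {..<k + 5}" unfolding coded_gaps_def by auto
  then have "(\<Sum>s<k + 5. x ^ Suc s) \<le> gap_series (coded_gaps k w) x"
    using gap_series_ge_partial[OF assms, of "coded_gaps k w" "k + 5"] by simp
  moreover have "(\<Sum>s<k + 5. x ^ Suc s) = x * (1 - x ^ (k + 5)) / (1 - x)"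
    using assms by (simp add: sum_distrib_left[symmetric] sum_gp_strict)
  ultimately show ?thesis by simp
qed

text \<open>Compare the two series at the first index where \<open>S\<close> and \<open>S'\<close> differ: by the two tail
  conditions, the rest of the series can neither make up for a missing gap nor absorb an extra one.\<close>

lemma gap_series_root_unique:
  fixes x :: real
  assumes x: "0 < x" "x < 1" and root: "gap_series S x = 1" and root': "gap_series S' x = 1"
    and gap_tail: "\<And>n. n \<in> S \<Longrightarrow> x / (1 - x) < 1 + gap_series {i. n + 1 + i \<in> S} x"
    and nongap_tail: "\<And>n. n \<notin> S \<Longrightarrow> gap_series {i. n + 1 + i \<in> S} x < 1"
  shows "S' = S"
proof (rule ccontr)
  assume ne: "S' \<noteq> S"
  then have ex: "\<exists>n. (n \<in> S) \<noteq> (n \<in> S')" by auto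
  define n where "n = (LEAST n. (n \<in> S) \<noteq> (n \<in> S'))"
  have n: "(n \<in> S) \<noteq> (n \<in> S')" unfolding n_def by (rule LeastI_ex[OF ex])
  have bef: "(i \<in> S) = (i \<in> S')" if "i < n" for i using not_less_Least[OF that[unfolded n_def]] by blast
  have x0: "0 \<le> x" using x by simp
  have pre: "(\<Sum>i<n. if i \<in> S then x ^ Suc i else 0) = (\<Sum>i<n. if i \<in> S' then x ^ Suc i else 0)"
    by (rule sum.cong) (use bef in auto)
  have eq: "(if n \<in> S then x ^ Suc n else 0) + x ^ Suc n * gap_series {i. n + 1 + i \<in> S} x
      = (if n \<in> S' then x ^ Suc n else 0) + x ^ Suc n * gap_series {i. n + 1 + i \<in> S'} x"
    using gap_series_split[OF x0 x(2), of S n] gap_series_split[OF x0 x(2), of S' n] root root' pre by simp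
  have xp: "x ^ Suc n > 0" using x by simp
  show False
  proof (cases "n \<in> S")
    case True
    then have nS': "n \<notin> S'" using n by simp
    have "x ^ Suc n * (1 + gap_series {i. n + 1 + i \<in> S} x) = x ^ Suc n * gap_series {i. n + 1 + i \<in> S'} x"
      using eq True nS' by (simp add: algebra_simps)
    then have "1 + gap_series {i. n + 1 + i \<in> S} x = gap_series {i. n + 1 + i \<in> S'} x" using xp by (metis mult_left_cancel order_less_irrefl)
    also have "\<dots> \<le> x / (1 - x)" by (rule gap_series_le_geometric[OF x0 x(2)])
    finally show False using gap_tail[OF True] by simp
  next
    case False
    then have nS': "n \<in> S'" using n by simp
    have "x ^ Suc n * gap_series {i. n + 1 + i \<in> S} x = x ^ Suc n * (1 + gap_series {i. n + 1 + i \<in> S'} x)"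
      using eq False nS' by (simp add: algebra_simps)
    then have "gap_series {i. n + 1 + i \<in> S} x = 1 + gap_series {i. n + 1 + i \<in> S'} x" using xp by (metis mult_left_cancel order_less_irrefl)
    moreover have "0 \<le> gap_series {i. n + 1 + i \<in> S'} x" by (rule gap_series_nonneg[OF x0 x(2)])
    ultimately show False using nongap_tail[OF False] by simp
  qed
qed

lemma le_13_25_if_2x_minus_1_le_pow6:
  fixes x :: real
  assumes x: "0 < x" "x < 1" and h: "2 * x - 1 \<le> x ^ 6"
  shows "x \<le> 13/25"
proof (rule ccontr)
  assume "\<not> x \<le> 13/25"
  then have xg: "13/25 < x" by simp
  have p: "(13/25::real) ^ i \<le> x ^ i" for i using xg by (intro power_mono) auto
  have "(13/25::real) + (13/25)^2 + (13/25)^3 + (13/25)^4 + (13/25)^5 \<le> x + x^2 + x^3 + x^4 + x^5"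
    using p[of 2] p[of 3] p[of 4] p[of 5] xg by linarith
  moreover have "(1::real) < (13/25) + (13/25)^2 + (13/25)^3 + (13/25)^4 + (13/25)^5" by (simp add: power_numeral_reduce)
  ultimately have s: "0 < x + x^2 + x^3 + x^4 + x^5 - 1" by simp
  have "0 < (1 - x) * (x + x^2 + x^3 + x^4 + x^5 - 1)" using s x by simp
  also have "\<dots> = 2 * x - 1 - x ^ 6" by (simp add: algebra_simps power2_eq_square power3_eq_cube power_numeral_reduce)
  finally show False using h by simp
qed

context
  fixes k :: nat and w :: "nat \<Rightarrow> bool" and x :: real
  assumes k: "0 < k" and x: "0 \<le> x" "x < 1" and root: "gap_series (coded_gaps k w) x = 1"
begin

lemma coded_root_partial_bound: "2 * x - 1 \<le> x ^ (k + 6)"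
proof -
  have "x * (1 - x ^ (k + 5)) / (1 - x) \<le> 1" using gap_series_coded_gaps_ge[OF x, of k w] root by simp
  then have "x * (1 - x ^ (k + 5)) \<le> 1 - x" using x by (simp add: field_simps)
  moreover have "x * x ^ (k + 5) = x ^ (k + 6)" by (simp add: power_add power_numeral_reduce)
  ultimately show ?thesis by (simp add: algebra_simps)
qed

lemma coded_root_gt_half: "1/2 < x"
proof -
  have "1 \<le> x / (1 - x) - x ^ Suc (k + 5)" using gap_series_le_miss[OF x k_plus_5_notin_coded_gaps[OF k, of w]] root by linarith
  moreover have "0 < x ^ Suc (k + 5)"
  proof -
    have "x \<noteq> 0"
    proof
      assume "x = 0" then show False using root gap_series_le_geometric[of 0 "coded_gaps k w"] by simp
    qed
    then show ?thesis using x by simp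
  qed
  ultimately have "1 < x / (1 - x)" by simp
  then show ?thesis using x by (simp add: field_simps)
qed

lemma coded_root_le_13_25: "x \<le> 13/25"
proof (rule le_13_25_if_2x_minus_1_le_pow6)
  show "0 < x" using coded_root_gt_half by simp
  show "x < 1" using x by simp
  have "x ^ (k + 6) \<le> x ^ 6" using x by (intro power_decreasing) auto
  then show "2 * x - 1 \<le> x ^ 6" using coded_root_partial_bound by simp
qed

lemma coded_root_tail_bound: "x / (1 - x) - x ^ (k + 2) \<le> 1 - 4/5 * x ^ (k + 2)"
proof -
  have x1: "0 < 1 - x" using x by simp
  have x4: "x ^ 4 \<le> (1 - x) / 5"
  proof -
    have "x ^ 4 \<le> (13/25) ^ 4" using coded_root_le_13_25 x by (intro power_mono) auto
    also have "\<dots> \<le> (1 - 13/25) / 5" by (simp add: power_numeral_reduce)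
    also have "\<dots> \<le> (1 - x) / 5" using coded_root_le_13_25 by simp
    finally show ?thesis .
  qed
  have "x / (1 - x) - 1 = (2 * x - 1) / (1 - x)" using x1 by (simp add: field_simps)
  also have "\<dots> \<le> x ^ (k + 6) / (1 - x)" using coded_root_partial_bound x1 by (intro divide_right_mono) auto
  also have "x ^ (k + 6) = x ^ (k + 2) * x ^ 4"
  proof -
    have e: "k + 2 + 4 = k + 6" by simp
    show ?thesis using power_add[of x "k + 2" 4] unfolding e .
  qed
  also have "x ^ (k + 2) * x ^ 4 / (1 - x) \<le> x ^ (k + 2) * ((1 - x) / 5) / (1 - x)"
    using x4 x x1 by (intro divide_right_mono mult_left_mono) auto
  also have "\<dots> = x ^ (k + 2) / 5" using x1 by (simp add: field_simps)
  finally have h: "x / (1 - x) - 1 \<le> x ^ (k + 2) / 5" .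
  show ?thesis using h by linarith
qed

lemma coded_root_tail_lt_1: "n \<notin> coded_gaps k w \<Longrightarrow> gap_series {i. n + 1 + i \<in> coded_gaps k w} x < 1"
proof -
  assume n: "n \<notin> coded_gaps k w"
  obtain j where j: "j \<le> k + 1" "n + 1 + j \<notin> coded_gaps k w" using coded_gaps_miss[OF k n] by auto
  have "gap_series {i. n + 1 + i \<in> coded_gaps k w} x \<le> x / (1 - x) - x ^ Suc j"
    by (rule gap_series_le_miss[OF x]) (use j in simp)
  also have "\<dots> \<le> x / (1 - x) - x ^ (k + 2)"
    using power_decreasing[of "Suc j" "k + 2" x] x j by simp
  also have "\<dots> \<le> 1 - 4/5 * x ^ (k + 2)" by (rule coded_root_tail_bound)
  also have "\<dots> < 1" using coded_root_gt_half by simp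
  finally show ?thesis .
qed

lemma coded_root_tail_gt: "n \<in> coded_gaps k w \<Longrightarrow> x / (1 - x) < 1 + gap_series {i. n + 1 + i \<in> coded_gaps k w} x"
proof -
  obtain j where j: "j \<le> k + 1" "n + 1 + j \<in> coded_gaps k w" using coded_gaps_hit[OF k] by blast
  have "x ^ (k + 2) \<le> x ^ Suc j" by (rule power_decreasing) (use x j in auto)
  also have "x ^ Suc j \<le> gap_series {i. n + 1 + i \<in> coded_gaps k w} x"
    by (rule gap_series_ge_term[OF x]) (use j in simp)
  finally have "x ^ (k + 2) \<le> gap_series {i. n + 1 + i \<in> coded_gaps k w} x" .
  moreover have "0 < x ^ (k + 2)" using coded_root_gt_half by simp
  ultimately show ?thesis using coded_root_tail_bound by simp
qed

lemma coded_root_unique: "gap_series S' x = 1 \<Longrightarrow> S' = coded_gaps k w"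
  by (rule gap_series_root_unique[OF _ x(2) root]) (use coded_root_gt_half coded_root_tail_lt_1 coded_root_tail_gt in auto)

end

lemma coded_root_exists:
  assumes "0 < k"
  shows "\<exists>x. 1/2 \<le> x \<and> x \<le> 13/25 \<and> gap_series (coded_gaps k w) x = 1"
proof (rule IVT')
  have "gap_series (coded_gaps k w) (1/2) \<le> (1/2) / (1 - 1/2) - (1/2) ^ Suc (k + 5)"
    by (rule gap_series_le_miss[OF _ _ k_plus_5_notin_coded_gaps[OF assms]]) auto
  also have "\<dots> \<le> 1" by simp
  finally show "gap_series (coded_gaps k w) (1/2) \<le> 1" .
  have "(13/25::real) ^ (k + 5) \<le> (13/25) ^ 6" by (rule power_decreasing) (use assms in auto)
  also have "\<dots> \<le> 1/13" by (simp add: power_numeral_reduce)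
  finally have "1 \<le> 13/25 * (1 - (13/25::real) ^ (k + 5)) / (1 - 13/25)" by simp
  also have "\<dots> \<le> gap_series (coded_gaps k w) (13/25)" by (rule gap_series_coded_gaps_ge) auto
  finally show "1 \<le> gap_series (coded_gaps k w) (13/25)" .
  show "continuous_on {1/2..13/25} (gap_series (coded_gaps k w))"
    by (intro continuous_at_imp_continuous_on ballI isCont_gap_series) auto
qed simp

definition coded_root :: "nat \<Rightarrow> (nat \<Rightarrow> bool) \<Rightarrow> real" where
  "coded_root k w = (SOME x. 1/2 \<le> x \<and> x \<le> 13/25 \<and> gap_series (coded_gaps k w) x = 1)"

definition coded_entropy :: "nat \<Rightarrow> (nat \<Rightarrow> bool) \<Rightarrow> real" where
  "coded_entropy k w = - log 2 (coded_root k w)"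

lemma coded_root:
  assumes "0 < k"
  shows "1/2 < coded_root k w" "coded_root k w \<le> 13/25" "gap_series (coded_gaps k w) (coded_root k w) = 1"
proof -
  have "1/2 \<le> coded_root k w \<and> coded_root k w \<le> 13/25 \<and> gap_series (coded_gaps k w) (coded_root k w) = 1"
    unfolding coded_root_def by (rule someI_ex[OF coded_root_exists[OF assms]])
  then show "coded_root k w \<le> 13/25" "gap_series (coded_gaps k w) (coded_root k w) = 1"
    and "1/2 < coded_root k w" using coded_root_gt_half[OF assms] by auto
qed

definition unique_gap_entropies :: "real set" where
  "unique_gap_entropies = {q. 0 < q \<and> q < 1 \<and> (\<exists>!X. (\<exists>S. S \<noteq> {} \<and> X = gap_shift S) \<and> entropy X = q)}"

lemma coded_entropy_in_unique_gap_entropies: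
  assumes "0 < k"
  shows "coded_entropy k w \<in> unique_gap_entropies"
proof -
  let ?x = "coded_root k w" and ?q = "coded_entropy k w"
  have x: "1/2 < ?x" "?x \<le> 13/25" "gap_series (coded_gaps k w) ?x = 1" using coded_root[OF assms] by auto
  have "log 2 (1/2) < log 2 ?x" "log 2 ?x < log 2 1" using x by (simp_all add: log_less_cancel_iff)
  then have q: "0 < ?q" "?q < 1" unfolding coded_entropy_def by (simp_all add: log_divide)
  have "2 powr - ?q = ?x" unfolding coded_entropy_def using x by simp
  then have entropy: "entropy (gap_shift S) = ?q \<longleftrightarrow> gap_series S ?x = 1" for S
    using entropy_gap_shift_eq_iff[OF q(1)] by simp
  have "coded_gaps k w \<noteq> {}" unfolding coded_gaps_def by auto
  moreover have unique: "S = coded_gaps k w" if "gap_series S ?x = 1" for S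
    by (rule coded_root_unique[OF assms _ _ x(3) that]) (use x in auto)
  ultimately have "\<exists>!X. (\<exists>S. S \<noteq> {} \<and> X = gap_shift S) \<and> entropy X = ?q"
  proof (intro ex1I[of _ "gap_shift (coded_gaps k w)"])
    show "(\<exists>S. S \<noteq> {} \<and> gap_shift (coded_gaps k w) = gap_shift S) \<and> entropy (gap_shift (coded_gaps k w)) = ?q"
      using entropy x(3) \<open>coded_gaps k w \<noteq> {}\<close> by blast
  next
    fix X assume "(\<exists>S. S \<noteq> {} \<and> X = gap_shift S) \<and> entropy X = ?q"
    then obtain S where "X = gap_shift S" "entropy (gap_shift S) = ?q" by auto
    then show "X = gap_shift (coded_gaps k w)" using entropy unique by simp
  qed
  then show ?thesis unfolding unique_gap_entropies_def using q by simp
qed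

section \<open>A Hoelder parametrisation of the unit interval\<close>

definition binary_value :: "(nat \<Rightarrow> bool) \<Rightarrow> real" where
  "binary_value w = (\<Sum>i. if w i then (1/2) ^ Suc i else 0)"

lemma half_powers_sums: "(\<lambda>i. (1/2::real) ^ Suc i) sums 1"
  using geometric_Suc_sums[of "1/2"] by simp

lemma summable_half_powers: "summable (\<lambda>i. (1/2::real) ^ Suc i)"
  using half_powers_sums by (rule sums_summable)

lemma summable_binary_digits: "summable (\<lambda>i. if w i then (1/2::real) ^ Suc i else 0)"
  by (rule summable_comparison_test'[OF summable_half_powers]) auto

lemma binary_value_diff_le:
  assumes agree: "\<And>i. i < p \<Longrightarrow> w i = w' i"
  shows "\<bar>binary_value w - binary_value w'\<bar> \<le> (1/2) ^ p"
proof -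
  define d where "d = (\<lambda>i. (if w i then (1/2::real) ^ Suc i else 0) - (if w' i then (1/2) ^ Suc i else 0))"
  have sd: "summable d" unfolding d_def by (intro summable_diff summable_binary_digits)
  have "binary_value w - binary_value w' = suminf d" unfolding binary_value_def d_def by (rule suminf_diff[OF summable_binary_digits summable_binary_digits])
  also have "\<dots> = (\<Sum>i. d (i + p)) + (\<Sum>i<p. d i)" by (rule suminf_split_initial_segment[OF sd])
  also have "(\<Sum>i<p. d i) = 0" unfolding d_def using agree by (intro sum.neutral) auto
  finally have e: "binary_value w - binary_value w' = (\<Sum>i. d (i + p))" by simp
  have "\<bar>\<Sum>i. d (i + p)\<bar> \<le> (\<Sum>i. (1/2) ^ p * (1/2) ^ Suc i)"
  proof (rule norm_suminf_le[of "\<lambda>i. d (i + p)", unfolded real_norm_def])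
    show "\<bar>d (i + p)\<bar> \<le> (1/2) ^ p * (1/2) ^ Suc i" for i
      unfolding d_def by (auto simp: power_add)
    show "summable (\<lambda>i. (1/2::real) ^ p * (1/2) ^ Suc i)" by (rule summable_mult[OF summable_half_powers])
  qed
  also have "\<dots> = (1/2) ^ p * (\<Sum>i. (1/2::real) ^ Suc i)" by (rule suminf_mult[OF summable_half_powers])
  also have "(\<Sum>i. (1/2::real) ^ Suc i) = 1" using half_powers_sums by (simp add: sums_iff)
  finally show ?thesis using e by simp
qed

lemma binary_value_nonneg: "0 \<le> binary_value w"
  unfolding binary_value_def by (rule suminf_nonneg[OF summable_binary_digits]) auto

lemma binary_value_le_1: "binary_value w \<le> 1"
proof -
  have "binary_value w \<le> (\<Sum>i. (1/2::real) ^ Suc i)" unfolding binary_value_def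
    by (rule suminf_le[OF _ summable_binary_digits summable_half_powers]) auto
  then show ?thesis using half_powers_sums by (simp add: sums_iff)
qed

lemma floor_double:
  fixes t :: real
  shows "\<lfloor>2 ^ Suc n * t\<rfloor> = 2 * \<lfloor>2 ^ n * t\<rfloor> + (if odd \<lfloor>2 ^ Suc n * t\<rfloor> then 1 else 0)"
proof -
  define a where "a = \<lfloor>2 ^ n * t\<rfloor>"
  have a: "real_of_int a \<le> 2 ^ n * t" "2 ^ n * t < real_of_int a + 1" unfolding a_def by linarith+
  have b: "2 * real_of_int a \<le> 2 ^ Suc n * t" "2 ^ Suc n * t < 2 * real_of_int a + 2" using a by auto
  have lo: "2 * a \<le> \<lfloor>2 ^ Suc n * t\<rfloor>" using b(1) by (simp add: le_floor_iff)
  have hi: "\<lfloor>2 ^ Suc n * t\<rfloor> \<le> 2 * a + 1" using b(2) by (simp add: floor_le_iff)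
  show ?thesis
  proof (cases "\<lfloor>2 ^ Suc n * t\<rfloor> = 2 * a")
    case True
    then show ?thesis unfolding a_def by simp
  next
    case False
    then have "\<lfloor>2 ^ Suc n * t\<rfloor> = 2 * a + 1" using lo hi by linarith
    then show ?thesis unfolding a_def by simp
  qed
qed

lemma floor_dyadic_LIMSEQ:
  fixes t :: real
  shows "(\<lambda>n. real_of_int \<lfloor>2 ^ n * t\<rfloor> / 2 ^ n) \<longlonglongrightarrow> t"
proof -
  have bound: "\<bar>real_of_int \<lfloor>2 ^ n * t\<rfloor> / 2 ^ n - t\<bar> \<le> (1/2) ^ n" for n
  proof -
    have "real_of_int \<lfloor>2 ^ n * t\<rfloor> \<le> 2 ^ n * t" "2 ^ n * t < real_of_int \<lfloor>2 ^ n * t\<rfloor> + 1"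
      by linarith+
    then have "\<bar>real_of_int \<lfloor>2 ^ n * t\<rfloor> - 2 ^ n * t\<bar> \<le> 1" by (simp only: abs_le_iff) linarith
    then have "\<bar>real_of_int \<lfloor>2 ^ n * t\<rfloor> - 2 ^ n * t\<bar> / 2 ^ n \<le> 1 / 2 ^ n"
      by (intro divide_right_mono) auto
    moreover have "\<bar>real_of_int \<lfloor>2 ^ n * t\<rfloor> - 2 ^ n * t\<bar> / 2 ^ n = \<bar>real_of_int \<lfloor>2 ^ n * t\<rfloor> / 2 ^ n - t\<bar>"
      by (simp add: field_simps abs_div)
    ultimately show ?thesis by (simp add: power_one_over)
  qed
  have "(\<lambda>n. (1/2::real) ^ n) \<longlonglongrightarrow> 0" by (rule LIMSEQ_power_zero) simp
  then have "(\<lambda>n. real_of_int \<lfloor>2 ^ n * t\<rfloor> / 2 ^ n - t) \<longlonglongrightarrow> 0"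
    by (rule Lim_null_comparison[rotated]) (use bound in \<open>auto intro: always_eventually\<close>)
  then have "(\<lambda>n. (real_of_int \<lfloor>2 ^ n * t\<rfloor> / 2 ^ n - t) + t) \<longlonglongrightarrow> 0 + t"
    by (intro tendsto_add tendsto_const)
  then show ?thesis by simp
qed

lemma binary_value_surj:
  fixes t :: real
  assumes t: "0 \<le> t" "t < 1"
  shows "\<exists>w. binary_value w = t"
proof -
  define f where "f = (\<lambda>n. \<lfloor>2 ^ n * t\<rfloor>)"
  define w where "w = (\<lambda>i. odd (f (Suc i)))"
  let ?g = "\<lambda>i. if w i then (1/2::real) ^ Suc i else 0"
  have ps: "(\<Sum>i<n. ?g i) = real_of_int (f n) / 2 ^ n" for n
  proof (induction n)
    case 0 show ?case unfolding f_def using t by (simp add: floor_eq_iff)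
  next
    case (Suc n)
    have st: "f (Suc n) = 2 * f n + (if w n then 1 else 0)" unfolding f_def w_def
      using floor_double[of n t] unfolding f_def by simp
    have "(\<Sum>i<Suc n. ?g i) = real_of_int (f n) / 2 ^ n + ?g n" using Suc by simp
    also have "\<dots> = real_of_int (f (Suc n)) / 2 ^ Suc n"
      unfolding st by (simp add: field_simps power_one_over)
    finally show ?case .
  qed
  have l1: "(\<lambda>n. \<Sum>i<n. ?g i) \<longlonglongrightarrow> binary_value w" unfolding binary_value_def
    by (rule summable_LIMSEQ[OF summable_binary_digits])
  have l2: "(\<lambda>n. real_of_int (f n) / 2 ^ n) \<longlonglongrightarrow> t" unfolding f_def by (rule floor_dyadic_LIMSEQ)
  have "binary_value w = t" using LIMSEQ_unique[OF l1] l2 ps by simp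
  then show ?thesis by blast
qed

lemma coded_gap_series_deficit:
  assumes k: "0 < k" and agree: "\<And>b. b < p \<Longrightarrow> w b = w' b" and "\<not> w p" "w' p"
  shows "4/5 * (1/2) ^ (code_pos k p + k + 3) \<le> 1 - gap_series (coded_gaps k w) (coded_root k w')"
proof -
  define x where "x = coded_root k w'"
  define m where "m = code_pos k p"
  define S where "S = coded_gaps k w"
  define S' where "S' = coded_gaps k w'"
  let ?T = "{i. m + 1 + i \<in> S}" and ?T' = "{i. m + 1 + i \<in> S'}"
  have x: "1/2 < x" "x \<le> 13/25" "gap_series S' x = 1" unfolding x_def S'_def using coded_root[OF k] by auto
  then have x01: "0 \<le> x" "x < 1" by auto
  have "m \<notin> S" "m \<in> S'" unfolding m_def S_def S'_def using code_pos_mem_coded_gaps_iff[OF k] assms by auto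
  obtain j where j: "j \<le> k + 1" "m + 1 + j \<notin> S"
    using coded_gaps_miss[OF k \<open>m \<notin> S\<close>[unfolded S_def]] S_def by auto
  have "gap_series ?T x \<le> x / (1 - x) - x ^ Suc j" by (rule gap_series_le_miss[OF x01]) (use j in simp)
  also have "\<dots> \<le> x / (1 - x) - x ^ (k + 2)" using power_decreasing[of "Suc j" "k + 2" x] x01 j by simp
  also have "\<dots> \<le> 1 - 4/5 * x ^ (k + 2)" by (rule coded_root_tail_bound[OF k x01 x(3)[unfolded S'_def]])
  finally have tail: "4/5 * x ^ (k + 2) \<le> 1 + gap_series ?T' x - gap_series ?T x"
    using gap_series_nonneg[OF x01, of ?T'] by linarith
  have "(\<Sum>i<m. if i \<in> S then x ^ Suc i else 0) = (\<Sum>i<m. if i \<in> S' then x ^ Suc i else 0)"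
    using coded_gaps_eq_below_code_pos[OF k agree] unfolding S_def S'_def m_def by (intro sum.cong) auto
  then have split: "1 - gap_series S x = x ^ Suc m * (1 + gap_series ?T' x - gap_series ?T x)"
    using gap_series_split[OF x01, of S m] gap_series_split[OF x01, of S' m] x(3) \<open>m \<notin> S\<close> \<open>m \<in> S'\<close>
    by (simp add: algebra_simps)
  have "x ^ Suc m * (4/5 * x ^ (k + 2)) \<le> 1 - gap_series S x"
    unfolding split using tail x01 by (intro mult_left_mono) auto
  moreover have "(1/2) ^ (m + k + 3) \<le> x ^ (m + k + 3)" using x by (intro power_mono) auto
  moreover have "x ^ (m + k + 3) = x ^ Suc m * x ^ (k + 2)"
  proof -
    have "m + k + 3 = Suc m + (k + 2)" by simp
    then show ?thesis by (simp only: power_add)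
  qed
  ultimately show ?thesis unfolding x_def m_def S_def by simp
qed

lemma coded_root_separation:
  assumes k: "0 < k" and "\<And>b. b < p \<Longrightarrow> w b = w' b" "\<not> w p" "w' p"
  shows "(1/2) ^ (code_pos k p + k + 6) \<le> coded_root k w - coded_root k w'"
proof -
  define x where "x = coded_root k w"
  define x' where "x' = coded_root k w'"
  let ?S = "coded_gaps k w" and ?\<epsilon> = "4/5 * (1/2::real) ^ (code_pos k p + k + 3)"
  have x: "1/2 < x" "x \<le> 13/25" "gap_series ?S x = 1" and x': "1/2 < x'" "x' \<le> 13/25"
    unfolding x_def x'_def using coded_root[OF k] by auto
  have deficit: "?\<epsilon> \<le> gap_series ?S x - gap_series ?S x'"
    using coded_gap_series_deficit[of k p w w'] assms x(3) unfolding x'_def by simp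
  moreover have "0 < ?\<epsilon>" by simp
  ultimately have less: "gap_series ?S x' < gap_series ?S x" by linarith
  have "x' < x"
  proof (rule ccontr)
    assume "\<not> x' < x"
    then have "gap_series ?S x \<le> gap_series ?S x'"
      using gap_series_increment_bounds(1)[of x x' x' ?S] x x' by simp
    then show False using less by simp
  qed
  then have "gap_series ?S x - gap_series ?S x' \<le> (x - x') / (1 - 13/25)^2"
    using gap_series_increment_bounds(2)[of x' x "13/25" ?S] x x' by simp
  also have "\<dots> \<le> 5 * (x - x')" using \<open>x' < x\<close> by (simp add: power2_eq_square)
  finally have "?\<epsilon> \<le> 5 * (x - x')" using deficit by linarith
  then show ?thesis
    using \<open>x' < x\<close> unfolding x_def x'_def by (simp add: power_add power_numeral_reduce ac_simps; linarith)
qed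

lemma log2_diff_ge:
  fixes a b :: real
  assumes "0 < a" "a \<le> b" "b < 1"
  shows "b - a \<le> log 2 b - log 2 a"
proof -
  have b0: "0 < b" using assms by simp
  have "ln (a / b) \<le> a / b - 1" using assms b0 by (intro ln_le_minus_one) simp
  then have l: "1 - a / b \<le> ln b - ln a" using assms b0 by (simp add: ln_div)
  have "b - a \<le> 1 - a / b"
  proof -
    have "(b - a) * b \<le> (b - a)" using assms by (intro mult_left_le) auto
    then show ?thesis using b0 by (simp add: field_simps)
  qed
  also have "\<dots> \<le> ln b - ln a" by (rule l)
  also have "\<dots> \<le> (ln b - ln a) / ln 2"
  proof -
    have "0 \<le> ln b - ln a" using assms by simp
    moreover have "0 < ln (2::real)" "ln (2::real) \<le> 1" using ln_le_minus_one[of 2] by auto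
    ultimately show ?thesis by (simp add: le_divide_eq mult_left_le)
  qed
  also have "\<dots> = log 2 b - log 2 a" by (simp add: log_def diff_divide_distrib)
  finally show ?thesis .
qed

text \<open>\<open>code_pos k p\<close> grows like \<open>p * (k + 2) / k\<close>; this is where the exponent \<open>k / (k + 2)\<close> comes from.\<close>

lemma half_power_le_code_pos_powr:
  assumes k: "0 < k"
  shows "(1/2::real) ^ p \<le> 2 ^ (2 * k + 14) * ((1/2) ^ (code_pos k p + k + 6)) powr (real k / real (k + 2))"
proof -
  define \<alpha> where "\<alpha> = real k / real (k + 2)"
  define N where "N = code_pos k p + k + 6"
  have a01: "0 \<le> \<alpha>" "\<alpha> \<le> 1" unfolding \<alpha>_def by auto
  have Nn: "N = (2 * k + 14) + (p div k) * (k + 2) + p mod k" unfolding N_def code_pos_def by simp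
  have N: "real N = real (2 * k + 14) + real (p div k) * real (k + 2) + real (p mod k)"
    unfolding Nn by (simp only: of_nat_add of_nat_mult)
  have pn: "p = (p div k) * k + p mod k" by simp
  have p: "real p = real (p div k) * real k + real (p mod k)"
    by (subst pn) (simp only: of_nat_add of_nat_mult)
  have "\<alpha> * real N \<le> real (2 * k + 14) + real p"
  proof -
    have "\<alpha> * (real (p div k) * real (k + 2)) = real (p div k) * real k"
      unfolding \<alpha>_def by (simp add: field_simps del: of_nat_add)
    moreover have "\<alpha> * real N = \<alpha> * real (2 * k + 14) + \<alpha> * (real (p div k) * real (k + 2)) + \<alpha> * real (p mod k)"
      unfolding N by (simp only: distrib_left)
    ultimately have "\<alpha> * real N = \<alpha> * real (2 * k + 14) + real (p div k) * real k + \<alpha> * real (p mod k)"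
      by simp
    moreover have "\<alpha> * real (2 * k + 14) \<le> real (2 * k + 14)" using a01 by (intro mult_left_le_one_le) auto
    moreover have "\<alpha> * real (p mod k) \<le> real (p mod k)" using a01 by (intro mult_left_le_one_le) auto
    ultimately show ?thesis using p by linarith
  qed
  have h: "(1/2::real) ^ N = 2 powr (- real N)"
    by (simp add: powr_minus_divide powr_realpow power_one_over[symmetric])
  have hp: "(1/2::real) ^ p = 2 powr (- real p)"
    by (simp add: powr_minus_divide powr_realpow power_one_over[symmetric])
  have i1: "2 powr (- real p) \<le> 2 powr (real (2 * k + 14) - \<alpha> * real N)"
    using \<open>\<alpha> * real N \<le> _\<close> by simp
  have i2: "2 powr (real (2 * k + 14) - \<alpha> * real N) = 2 powr real (2 * k + 14) * 2 powr (- real N * \<alpha>)"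
    by (simp add: powr_add[symmetric] algebra_simps)
  have i3: "2 powr (- real N * \<alpha>) = ((1/2::real) ^ N) powr \<alpha>" unfolding h by (simp add: powr_powr)
  have i4: "2 powr real (2 * k + 14) = (2::real) ^ (2 * k + 14)" by (rule powr_realpow) simp
  have "(1/2::real) ^ p \<le> 2 powr (real (2 * k + 14) - \<alpha> * real N)" unfolding hp by (rule i1)
  also have "\<dots> = 2 powr real (2 * k + 14) * 2 powr (- real N * \<alpha>)" by (rule i2)
  also have "\<dots> = (2::real) ^ (2 * k + 14) * ((1/2::real) ^ N) powr \<alpha>" by (simp only: i3 i4)
  finally have "(1/2::real) ^ p \<le> (2::real) ^ (2 * k + 14) * ((1/2::real) ^ N) powr \<alpha>" .
  then show ?thesis unfolding \<alpha>_def N_def .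
qed

lemma binary_value_holder:
  assumes k: "0 < k"
  shows "\<bar>binary_value w - binary_value w'\<bar> \<le> 2 ^ (2 * k + 14) * \<bar>coded_entropy k w - coded_entropy k w'\<bar> powr (real k / real (k + 2))"
proof (cases "w = w'")
  case True
  then show ?thesis by simp
next
  case False
  then have ex: "\<exists>b. w b \<noteq> w' b" by auto
  define p where "p = (LEAST b. w b \<noteq> w' b)"
  have wp: "w p \<noteq> w' p" unfolding p_def by (rule LeastI_ex[OF ex])
  have agree: "w b = w' b" if "b < p" for b using not_less_Least[OF that[unfolded p_def]] by blast
  define N where "N = code_pos k p + k + 6"
  define \<alpha> where "\<alpha> = real k / real (k + 2)"
  have a0: "0 \<le> \<alpha>" unfolding \<alpha>_def by simp
  have xb: "1/2 < coded_root k v" "coded_root k v \<le> 13/25" for v using coded_root[OF k] by auto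
  have sepx: "(1/2) ^ N \<le> \<bar>coded_root k w - coded_root k w'\<bar>"
  proof (cases "w' p")
    case True
    then have "(1/2) ^ N \<le> coded_root k w - coded_root k w'" unfolding N_def
      using coded_root_separation[OF k agree] wp by simp
    then show ?thesis by simp
  next
    case False
    then have "(1/2) ^ N \<le> coded_root k w' - coded_root k w" unfolding N_def
      using coded_root_separation[OF k, of p w' w] agree wp by simp
    then show ?thesis by simp
  qed
  have sepq: "\<bar>coded_root k w - coded_root k w'\<bar> \<le> \<bar>coded_entropy k w - coded_entropy k w'\<bar>"
  proof (cases "coded_root k w \<le> coded_root k w'")
    case True
    have "coded_root k w' - coded_root k w \<le> log 2 (coded_root k w') - log 2 (coded_root k w)"
      by (rule log2_diff_ge) (use True xb[of w] xb[of w'] in auto)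
    then show ?thesis using True unfolding coded_entropy_def by simp
  next
    case False
    have "coded_root k w - coded_root k w' \<le> log 2 (coded_root k w) - log 2 (coded_root k w')"
      by (rule log2_diff_ge) (use False xb[of w] xb[of w'] in auto)
    then show ?thesis using False unfolding coded_entropy_def by simp
  qed
  have "\<bar>binary_value w - binary_value w'\<bar> \<le> (1/2) ^ p" by (rule binary_value_diff_le) (use agree in auto)
  also have "\<dots> \<le> 2 ^ (2 * k + 14) * ((1/2) ^ N) powr \<alpha>" unfolding N_def \<alpha>_def by (rule half_power_le_code_pos_powr[OF k])
  also have "\<dots> \<le> 2 ^ (2 * k + 14) * \<bar>coded_entropy k w - coded_entropy k w'\<bar> powr \<alpha>"
    using sepx sepq a0 by (intro mult_left_mono powr_mono2) auto
  finally show ?thesis unfolding \<alpha>_def .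
qed

section \<open>Hausdorff dimension\<close>

lemma Sup_minus_Inf_le_diameter:
  fixes V :: "real set"
  assumes b: "bounded V" and ne: "V \<noteq> {}"
  shows "Sup V - Inf V \<le> diameter V"
proof -
  have ba: "bdd_above V" and bb: "bdd_below V" using b bounded_imp_bdd_above bounded_imp_bdd_below by auto
  have "Sup V \<le> u + diameter V" if u: "u \<in> V" for u
  proof (rule cSup_least[OF ne])
    fix v assume v: "v \<in> V"
    have "dist v u \<le> diameter V" by (rule diameter_bounded_bound[OF b v u])
    then show "v \<le> u + diameter V" by (simp add: dist_real_def)
  qed
  then have "Sup V - diameter V \<le> Inf V" using ne by (intro cInf_greatest) (auto simp: algebra_simps)
  then show ?thesis by simp
qed

lemma suminf_diameter_ge_1_if_covers_unit_interval:
  fixes V :: "nat \<Rightarrow> real set"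
  assumes cov: "{0..<1} \<subseteq> (\<Union>i. V i)" and bnd: "\<And>i. bounded (V i)"
  shows "1 \<le> (\<Sum>i. ennreal (diameter (V i)))"
proof -
  define H where "H = (\<lambda>i. if V i = {} then {} else {Inf (V i) .. Sup (V i)})"
  have VH: "V i \<subseteq> H i" for i
  proof (cases "V i = {}")
    case False
    have "bdd_above (V i)" "bdd_below (V i)" using bnd[of i] bounded_imp_bdd_above bounded_imp_bdd_below by auto
    then show ?thesis unfolding H_def using False by (auto intro: cInf_lower cSup_upper)
  qed (simp add: H_def)
  have HS: "range H \<subseteq> sets lborel" unfolding H_def by auto
  have HM: "emeasure lborel (H i) \<le> ennreal (diameter (V i))" for i
  proof (cases "V i = {}")
    case False
    have le: "Inf (V i) \<le> Sup (V i)"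
    proof -
      obtain v where v: "v \<in> V i" using False by auto
      have "bdd_above (V i)" "bdd_below (V i)" using bnd[of i] bounded_imp_bdd_above bounded_imp_bdd_below by auto
      then show ?thesis using v by (meson cInf_lower cSup_upper order_trans)
    qed
    have "emeasure lborel (H i) = ennreal (Sup (V i) - Inf (V i))" unfolding H_def using False le by simp
    also have "\<dots> \<le> ennreal (diameter (V i))" using Sup_minus_Inf_le_diameter[OF bnd False] by (simp add: ennreal_leI)
    finally show ?thesis .
  qed (simp add: H_def)
  have "1 = emeasure lborel {0::real..<1}" by simp
  also have "\<dots> \<le> emeasure lborel (\<Union>i. H i)"
  proof (rule emeasure_mono)
    show "{0..<1} \<subseteq> (\<Union>i. H i)" using cov VH by blast
    show "(\<Union>i. H i) \<in> sets lborel" using HS by (rule sets.countable_UN)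
  qed
  also have "\<dots> \<le> (\<Sum>i. emeasure lborel (H i))" by (rule emeasure_subadditive_countably[OF HS])
  also have "\<dots> \<le> (\<Sum>i. ennreal (diameter (V i)))" by (rule suminf_le[OF HM summableI summableI])
  finally show ?thesis .
qed

lemma covering_sum_ge_if_holder_parametrised:
  fixes f g :: "'a \<Rightarrow> real" and U :: "nat \<Rightarrow> real set"
  assumes onto: "{0..<1} \<subseteq> range f" and bounded_f: "range f \<subseteq> {0..1}"
    and holder: "\<And>u v. \<bar>f u - f v\<bar> \<le> K * \<bar>g u - g v\<bar> powr \<alpha>"
    and "0 < K" "0 \<le> s" "s \<le> \<alpha>"
    and cover: "range g \<subseteq> (\<Union>i. U i)" and U: "\<And>i. bounded (U i)" "\<And>i. diameter (U i) \<le> 1"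
  shows "ennreal (1 / K) \<le> (\<Sum>i. ennreal (diameter (U i) powr s))"
proof -
  define V where "V = (\<lambda>i. f ` {u. g u \<in> U i})"
  have "{0..<1} \<subseteq> (\<Union>i. V i)"
  proof
    fix t :: real assume "t \<in> {0..<1}"
    then obtain u where "t = f u" using onto by auto
    moreover obtain i where "g u \<in> U i" using cover by auto
    ultimately show "t \<in> (\<Union>i. V i)" unfolding V_def by blast
  qed
  moreover have "bounded (V i)" for i
    by (rule bounded_subset[of "{0..1}"]) (use bounded_f in \<open>auto simp: V_def\<close>)
  ultimately have "1 \<le> (\<Sum>i. ennreal (diameter (V i)))" by (rule suminf_diameter_ge_1_if_covers_unit_interval)
  also have "\<dots> \<le> (\<Sum>i. ennreal K * ennreal (diameter (U i) powr s))"
  proof (intro suminf_le summableI)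
    fix i
    have "diameter (V i) \<le> K * diameter (U i) powr s"
    proof (rule diameter_le)
      fix a b assume "a \<in> V i" "b \<in> V i"
      then obtain u v where uv: "a = f u" "b = f v" "g u \<in> U i" "g v \<in> U i" unfolding V_def by auto
      then have dist: "\<bar>g u - g v\<bar> \<le> diameter (U i)"
        using diameter_bounded_bound[OF U(1)] by (simp add: dist_real_def)
      have "norm (a - b) \<le> K * \<bar>g u - g v\<bar> powr \<alpha>" using holder uv by simp
      also have "\<dots> \<le> K * diameter (U i) powr \<alpha>"
        using dist \<open>0 < K\<close> \<open>0 \<le> s\<close> \<open>s \<le> \<alpha>\<close> by (intro mult_left_mono powr_mono2) auto
      also have "\<dots> \<le> K * diameter (U i) powr s"
        using dist \<open>0 < K\<close> \<open>s \<le> \<alpha>\<close> U(2) by (intro mult_left_mono powr_mono') auto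
      finally show "norm (a - b) \<le> K * diameter (U i) powr s" .
    qed (use \<open>0 < K\<close> in simp)
    then show "ennreal (diameter (V i)) \<le> ennreal K * ennreal (diameter (U i) powr s)"
      using \<open>0 < K\<close> by (simp add: ennreal_mult[symmetric] ennreal_leI)
  qed
  also have "\<dots> = ennreal K * (\<Sum>i. ennreal (diameter (U i) powr s))" by simp
  finally have "1 \<le> ennreal K * (\<Sum>i. ennreal (diameter (U i) powr s))" .
  then have "ennreal (1 / K) * 1 \<le> ennreal (1 / K) * (ennreal K * (\<Sum>i. ennreal (diameter (U i) powr s)))"
    by (rule mult_left_mono) simp
  then show ?thesis using \<open>0 < K\<close> by (simp add: mult.assoc[symmetric] ennreal_mult[symmetric])
qed

lemma hausdorff_measure_ge_if_holder_parametrised: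
  fixes f g :: "'a \<Rightarrow> real"
  assumes "{0..<1} \<subseteq> range f" "range f \<subseteq> {0..1}" "range g \<subseteq> A"
    and "\<And>u v. \<bar>f u - f v\<bar> \<le> K * \<bar>g u - g v\<bar> powr \<alpha>"
    and "0 < K" "0 \<le> s" "s \<le> \<alpha>"
  shows "ennreal (1 / K) \<le> hausdorff_measure s A"
proof -
  have "ennreal (1 / K) \<le> (INF U\<in>{U. A \<subseteq> (\<Union>i. U i) \<and> (\<forall>i. bounded (U i) \<and> diameter (U i) \<le> 1)}.
                              (\<Sum>i. ennreal (diameter (U i) powr s)))"
  proof (rule INF_greatest, safe)
    fix U :: "nat \<Rightarrow> real set"
    assume "A \<subseteq> (\<Union>i. U i)" "\<forall>i. bounded (U i) \<and> diameter (U i) \<le> 1"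
    then show "ennreal (1 / K) \<le> (\<Sum>i. ennreal (diameter (U i) powr s))"
      using assms by (intro covering_sum_ge_if_holder_parametrised[where f = f and g = g and \<alpha> = \<alpha>]) auto
  qed
  also have "\<dots> \<le> hausdorff_measure s A"
    unfolding hausdorff_measure_def by (rule SUP_upper[of 1]) simp
  finally show ?thesis .
qed

lemma unit_interval_subinterval:
  fixes t :: real
  assumes t: "0 \<le> t" "t \<le> 1" and N: "N > 0"
  shows "\<exists>i<N. t \<in> {real i / real N .. (real i + 1) / real N}"
proof (cases "t = 1")
  case True
  then show ?thesis using N by (intro exI[of _ "N - 1"]) (auto simp: of_nat_diff divide_simps)
next
  case False
  then have t1: "t < 1" using t by simp
  define i where "i = nat \<lfloor>t * real N\<rfloor>"
  have fl: "real_of_int \<lfloor>t * real N\<rfloor> \<le> t * real N" "t * real N < real_of_int \<lfloor>t * real N\<rfloor> + 1" by linarith+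
  have f0: "0 \<le> \<lfloor>t * real N\<rfloor>" using t N by simp
  have ri: "real i = real_of_int \<lfloor>t * real N\<rfloor>" unfolding i_def using f0 by simp
  have "t * real N < real N" using t1 N by simp
  then have "real i < real N" using ri fl by linarith
  then have iN: "i < N" by simp
  have "real i / real N \<le> t" using ri fl N by (simp add: divide_simps)
  moreover have "t \<le> (real i + 1) / real N" using ri fl N by (simp add: divide_simps)
  ultimately show ?thesis using iN by auto
qed

lemma unit_interval_uniform_cover:
  assumes N: "0 < N"
  shows "\<exists>U :: nat \<Rightarrow> real set. {0..1} \<subseteq> (\<Union>i. U i) \<and> (\<forall>i. bounded (U i) \<and> diameter (U i) \<le> 1 / real N)
           \<and> (\<Sum>i. ennreal (diameter (U i) powr s)) = ennreal (real N powr (1 - s))"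
proof (intro exI conjI allI)
  define U where "U = (\<lambda>i. if i < N then {real i / real N .. (real i + 1) / real N} else {})"
  have dU: "diameter (U i) = (if i < N then 1 / real N else 0)" for i
  proof (cases "i < N")
    case True
    have "real i / real N \<le> (real i + 1) / real N" using N by (intro divide_right_mono) auto
    then have "diameter (U i) = (real i + 1) / real N - real i / real N"
      unfolding U_def using True by simp
    then show ?thesis using True by (simp add: diff_divide_distrib[symmetric])
  qed (simp add: U_def)
  show "{0..1} \<subseteq> (\<Union>i. U i)"
  proof
    fix t :: real assume "t \<in> {0..1}"
    then obtain i where "i < N" "t \<in> {real i / real N .. (real i + 1) / real N}"
      using unit_interval_subinterval N by auto
    then show "t \<in> (\<Union>i. U i)" unfolding U_def by auto
  qed
  show "bounded (U i)" for i unfolding U_def by auto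
  show "diameter (U i) \<le> 1 / real N" for i unfolding dU by simp
  have "(\<Sum>i. ennreal (diameter (U i) powr s)) = (\<Sum>i<N. ennreal (diameter (U i) powr s))"
    by (rule suminf_finite) (auto simp: dU)
  also have "\<dots> = ennreal (real N * (1 / real N) powr s)"
    by (simp add: dU ennreal_of_nat_eq_real_of_nat ennreal_mult)
  also have "real N * (1 / real N) powr s = real N powr (1 - s)"
    using N by (simp add: powr_divide powr_diff)
  finally show "(\<Sum>i. ennreal (diameter (U i) powr s)) = ennreal (real N powr (1 - s))" .
qed

lemma hausdorff_measure_eq_0_if_subset_unit_interval:
  assumes A: "A \<subseteq> {0..1}" and "1 < s"
  shows "hausdorff_measure s A = 0"
proof -
  define H where "H \<delta> = (INF U\<in>{U. A \<subseteq> (\<Union>i. U i) \<and> (\<forall>i. bounded (U i) \<and> diameter (U i) \<le> \<delta>)}.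
                          (\<Sum>i. ennreal (diameter (U i) powr s)))" for \<delta>
  have small: "H \<delta> \<le> ennreal e" if "0 < \<delta>" "0 < e" for \<delta> e
  proof -
    have "(\<lambda>N. real N powr (1 - s)) \<longlonglongrightarrow> 0"
      using \<open>1 < s\<close> by (intro tendsto_neg_powr filterlim_real_sequentially) auto
    then have "eventually (\<lambda>N. real N powr (1 - s) < e) sequentially"
      using \<open>0 < e\<close> by (rule order_tendstoD(2))
    moreover have "(\<lambda>N. 1 / real N) \<longlonglongrightarrow> 0" by (rule lim_const_over_n)
    then have "eventually (\<lambda>N. 1 / real N < \<delta>) sequentially"
      using \<open>0 < \<delta>\<close> by (rule order_tendstoD(2))
    ultimately have "eventually (\<lambda>N. 0 < N \<and> real N powr (1 - s) < e \<and> 1 / real N < \<delta>) sequentially"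
      using eventually_gt_at_top[of 0] by eventually_elim auto
    then have "\<exists>N. 0 < N \<and> real N powr (1 - s) < e \<and> 1 / real N < \<delta>"
      by (rule eventually_happens'[OF sequentially_bot])
    then obtain N where N: "0 < N" "real N powr (1 - s) < e" "1 / real N < \<delta>" by blast
    obtain U :: "nat \<Rightarrow> real set" where U: "{0..1} \<subseteq> (\<Union>i. U i)" "\<And>i. bounded (U i)"
      "\<And>i. diameter (U i) \<le> 1 / real N"
      "(\<Sum>i. ennreal (diameter (U i) powr s)) = ennreal (real N powr (1 - s))"
      using unit_interval_uniform_cover[OF N(1), of s] by auto
    have "A \<subseteq> (\<Union>i. U i)" using A U(1) by blast
    moreover have "diameter (U i) \<le> \<delta>" for i using U(3)[of i] N(3) by linarith
    ultimately have "H \<delta> \<le> (\<Sum>i. ennreal (diameter (U i) powr s))"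
      unfolding H_def using U(2) by (intro INF_lower) blast
    also have "\<dots> = ennreal (real N powr (1 - s))" by (rule U(4))
    also have "\<dots> \<le> ennreal e" using N by (intro ennreal_leI) simp
    finally show ?thesis .
  qed
  have "H \<delta> \<le> 0" if "0 < \<delta>" for \<delta>
  proof (rule ennreal_le_epsilon)
    show "H \<delta> \<le> 0 + ennreal e" if "0 < e" for e using small[OF \<open>0 < \<delta>\<close> that] by simp
  qed
  then have "hausdorff_measure s A \<le> 0"
    unfolding hausdorff_measure_def H_def[symmetric] by (intro SUP_least) simp
  then show ?thesis by simp
qed

lemma hausdorff_dim_eq_1:
  assumes "A \<subseteq> {0..1}" and pos: "\<And>s. 0 \<le> s \<Longrightarrow> s < 1 \<Longrightarrow> hausdorff_measure s A \<noteq> 0"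
  shows "hausdorff_dim A = 1"
proof -
  let ?Z = "{s. 0 \<le> s \<and> hausdorff_measure s A = 0}"
  have upper: "s \<in> ?Z" if "1 < s" for s
    using hausdorff_measure_eq_0_if_subset_unit_interval[OF assms(1) that] that by simp
  have lower: "1 \<le> s" if "s \<in> ?Z" for s using pos that by force
  have "Inf ?Z \<le> 1 + e" if "0 < e" for e
    using upper that lower by (intro cInf_lower bdd_belowI[of _ 1]) auto
  then have "Inf ?Z \<le> 1" by (rule field_le_epsilon)
  moreover have "(2::real) \<in> ?Z" by (rule upper) simp
  then have "?Z \<noteq> {}" by blast
  then have "1 \<le> Inf ?Z" using lower by (intro cInf_greatest) auto
  ultimately show ?thesis unfolding hausdorff_dim_def by simp
qed

lemma hausdorff_measure_unique_gap_entropies_pos: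
  assumes "0 \<le> s" "s < 1"
  shows "hausdorff_measure s unique_gap_entropies \<noteq> 0"
proof -
  define k where "k = nat \<lceil>2 * s / (1 - s)\<rceil> + 1"
  have "0 < k" unfolding k_def by simp
  have "2 * s / (1 - s) \<le> real k" unfolding k_def by linarith
  then have "s \<le> real k / real (k + 2)" using assms by (simp add: field_simps)
  moreover have "range (coded_entropy k) \<subseteq> unique_gap_entropies"
    using coded_entropy_in_unique_gap_entropies[OF \<open>0 < k\<close>] by auto
  moreover have "{0..<1} \<subseteq> range binary_value" using binary_value_surj by force
  moreover have "range binary_value \<subseteq> {0..1}" using binary_value_nonneg binary_value_le_1 by auto
  ultimately have "ennreal (1 / 2 ^ (2 * k + 14)) \<le> hausdorff_measure s unique_gap_entropies"
    using binary_value_holder[OF \<open>0 < k\<close>] assms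
    by (intro hausdorff_measure_ge_if_holder_parametrised[where f = binary_value and g = "coded_entropy k"])
      auto
  then show ?thesis by auto
qed

theorem theorem4p8:
  shows "hausdorff_dim {q. 0 < q \<and> q < 1 \<and>
           (\<exists>!X. (\<exists>S. S \<noteq> {} \<and> X = gap_shift S) \<and> entropy X = q)} = 1"
proof -
  have "unique_gap_entropies \<subseteq> {0..1}" unfolding unique_gap_entropies_def by auto
  then have "hausdorff_dim unique_gap_entropies = 1"
    using hausdorff_measure_unique_gap_entropies_pos by (rule hausdorff_dim_eq_1)
  then show ?thesis unfolding unique_gap_entropies_def .
qed

end
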